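(* Let $n\ge1$, $s\in\{1,\dots,n\}$, let $C\in\mathbb{R}^{n\times n}$ be symmetric positive definite, and let $0<t\le\lambda_{\min}(C)$. If $s\ge\operatorname{rank}(C-tI)$, then $\hat z^D(t)\le\hat z(0)$.
   Context: $\lambda_{\min}(C)$ is the smallest eigenvalue of $C$. For $0\le t\le\lambda_{\min}(C)$ let $A(t)\in\mathbb{R}^{n\times n}$ be a Cholesky factor of $C-tI$ (so $C-tI=A(t)^\top A(t)$), with $i$-th column $a_i(t)$, and for $x\in[0,1]^n$ let $M_t(x)=\sum_i x_i a_i(t)a_i(t)^\top$. For a positive semidefinite $X$ with eigenvalues $\lambda_1(X)\ge\dots\ge\lambda_n(X)$ and $t\ge0$, $\Phi_s(X;t)=\sum_{i=1}^s\log(\lambda_i(X)+t)$ (natural log); $\widehat{\Phi}_s(\cdot\,;t)$ is its concave envelope on the cone of $n\times n$ positive semidefinite matrices. $\hat z(0)=\max\{\widehat{\Phi}_s(M_0(x);0) : x\in[0,1]^n,\ \sum_i x_i=s\}$ (the factorization bound), and for $t>0$, $\hat z^D(t)=\max\{\log\det(M_t(x)+tI) : x\in[0,1]^n,\ \sum_i x_i=s\}-(n-s)\log(t)$. *)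

theory Defs
  imports "HOL-Analysis.Analysis" "HOL-Library.Multiset"
begin

text \<open>Square real matrices of size n = CARD('n) are elements of real^'n^'n.
  The index type is linearly ordered so that triangularity makes sense.\<close>

definition symmetric_mat :: "real^'n^'n \<Rightarrow> bool" where
  "symmetric_mat X \<longleftrightarrow> transpose X = X"

definition psd :: "real^'n^'n \<Rightarrow> bool" where
  "psd X \<longleftrightarrow> symmetric_mat X \<and> (\<forall>v. 0 \<le> v \<bullet> (X *v v))"

definition pd :: "real^'n^'n \<Rightarrow> bool" where
  "pd X \<longleftrightarrow> symmetric_mat X \<and> (\<forall>v. v \<noteq> 0 \<longrightarrow> 0 < v \<bullet> (X *v v))"

text \<open>Eigenvalues with multiplicity: the multiset of roots of the characteristic
  polynomial det(xI - X) (which splits over the reals for symmetric X).\<close>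
definition eig_mset :: "real^'n^'n \<Rightarrow> real multiset" where
  "eig_mset X = (THE M. \<forall>x. det (mat x - X) = (\<Prod>a\<in>#M. x - a))"

text \<open>Eigenvalues in nonincreasing order: lambda_1 \<ge> ... \<ge> lambda_n (0-indexed list).\<close>
definition eigs_desc :: "real^'n^'n \<Rightarrow> real list" where
  "eigs_desc X = rev (sorted_list_of_multiset (eig_mset X))"

definition lambda_min :: "real^'n^'n \<Rightarrow> real" where
  "lambda_min X = Min (set_mset (eig_mset X))"

definition cholesky_factor :: "real^('n::{finite,linorder})^('n::{finite,linorder}) \<Rightarrow> real^('n::{finite,linorder})^('n::{finite,linorder}) \<Rightarrow> bool" where
  "cholesky_factor A B \<longleftrightarrow> B = transpose A ** A \<and>
      (\<forall>i j. j < i \<longrightarrow> A $ i $ j = 0) \<and> (\<forall>i. 0 \<le> A $ i $ i)"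

definition outer :: "real^'n \<Rightarrow> real^'n^'n" where
  "outer a = (\<chi> i j. a $ i * a $ j)"

definition M_of :: "real^'n^'n \<Rightarrow> real^'n \<Rightarrow> real^'n^'n" where
  "M_of A x = (\<Sum>i\<in>UNIV. (x $ i) *\<^sub>R outer (column i A))"

definition Phi :: "nat \<Rightarrow> real^'n^'n \<Rightarrow> real \<Rightarrow> ereal" where
  "Phi s X t = (if (\<forall>i<s. 0 < eigs_desc X ! i + t)
                then ereal (\<Sum>i<s. ln (eigs_desc X ! i + t)) else -\<infinity>)"

text \<open>Concavity of an extended-real valued function on S (convexity of the hypograph).\<close>
definition hypo_concave_on :: "'a::real_vector set \<Rightarrow> ('a \<Rightarrow> ereal) \<Rightarrow> bool" where
  "hypo_concave_on S g \<longleftrightarrow> (\<forall>x\<in>S. \<forall>y\<in>S. \<forall>u::real. 0 \<le> u \<longrightarrow> u \<le> 1 \<longrightarrow>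
      (\<forall>a b::real. ereal a \<le> g x \<longrightarrow> ereal b \<le> g y \<longrightarrow>
         ereal (u * a + (1 - u) * b) \<le> g (u *\<^sub>R x + (1 - u) *\<^sub>R y)))"

definition concave_env :: "('a::real_vector \<Rightarrow> ereal) \<Rightarrow> 'a set \<Rightarrow> 'a \<Rightarrow> ereal" where
  "concave_env f S X = Inf {g X | g. hypo_concave_on S g \<and> (\<forall>Y\<in>S. f Y \<le> g Y)}"

definition Phi_hat :: "nat \<Rightarrow> real^'n^'n \<Rightarrow> real \<Rightarrow> ereal" where
  "Phi_hat s X t = concave_env (\<lambda>Y. Phi s Y t) {Y. psd Y} X"

definition feas :: "nat \<Rightarrow> (real^'n) set" where
  "feas s = {x. (\<forall>i. 0 \<le> x $ i \<and> x $ i \<le> 1) \<and> (\<Sum>i\<in>UNIV. x $ i) = real s}"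

text \<open>Factorization bound hat z(0), with A0 a Cholesky factor of C.\<close>
definition zhat0 :: "nat \<Rightarrow> real^'n^'n \<Rightarrow> ereal" where
  "zhat0 s A0 = (SUP x\<in>feas s. Phi_hat s (M_of A0 x) 0)"

text \<open>hat z^D(t), with At a Cholesky factor of C - tI.\<close>
definition zD :: "nat \<Rightarrow> real \<Rightarrow> real^'n^'n \<Rightarrow> real" where
  "zD s t At = (SUP x\<in>feas s. ln (det (M_of At x + t *\<^sub>R mat 1)))
               - (real CARD('n) - real s) * ln t"

end

theory Submission
  imports Defs "HOL-Computational_Algebra.Polynomial"
begin

text \<open>
  Fix a feasible x and let lam and mu be the nonincreasing eigenvalues of M_0(x) and M_t(x).
  Since A_0^T A_0 = A_t^T A_t + t I, Ky Fan's maximum principle gives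
  lam_0 + ... + lam_(m-1) \<le> mu_0 + ... + mu_(m-1) + m t for m \<le> s, while the traces differ
  by exactly s t. As rank M_t(x) \<le> rank (C - t I) \<le> s, mu_k = 0 for k \<ge> s, hence
  log det (M_t(x) + t I) - (n - s) log t = sum_(k<s) log (mu_k + t). The vector (mu_k + t)_(k<s)
  majorizes the vector obtained from lam by keeping its k_0 largest entries and spreading the
  remaining mass evenly over s - k_0 places (k_0 being Nikolov's cutoff), so by concavity of log
  its log-sum is at most that of the flattened vector. Finally, M_0(x) is a convex combination
  of matrices with the eigenvectors of M_0(x) whose spectra come from the 0/1 vertices of a
  hypersimplex; Phi_s takes exactly the flattened log-sum at each of them, so the concave
  envelope of Phi_s at M_0(x) is at least that value.
\<close>

section \<open>Orthonormal sets and frames\<close>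

definition orthonormal_set :: "'a::real_inner set \<Rightarrow> bool" where
  "orthonormal_set B \<longleftrightarrow> finite B \<and> (\<forall>b\<in>B. \<forall>b'\<in>B. b \<bullet> b' = (if b = b' then 1 else 0))"

lemma bessel_inequality:
  fixes f :: "'i \<Rightarrow> 'a::real_inner"
  assumes "finite I" and orth: "\<And>i j. i \<in> I \<Longrightarrow> j \<in> I \<Longrightarrow> f i \<bullet> f j = (if i = j then 1 else 0)"
  shows "(\<Sum>i\<in>I. (f i \<bullet> w)\<^sup>2) \<le> w \<bullet> w"
proof -
  define p where "p = (\<Sum>i\<in>I. (f i \<bullet> w) *\<^sub>R f i)"
  have coeff: "f j \<bullet> p = f j \<bullet> w" if "j \<in> I" for j
  proof -
    have "f j \<bullet> p = (\<Sum>i\<in>I. (f i \<bullet> w) * (if j = i then 1 else 0))"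
      using orth that by (simp add: p_def inner_sum_right)
    then show ?thesis using that assms(1) by (simp add: if_distrib cong: if_cong)
  qed
  have pp: "p \<bullet> p = (\<Sum>i\<in>I. (f i \<bullet> w)\<^sup>2)" and pw: "p \<bullet> w = (\<Sum>i\<in>I. (f i \<bullet> w)\<^sup>2)"
    by (simp_all add: p_def inner_sum_left coeff[unfolded p_def] power2_eq_square)
  have "0 \<le> (w - p) \<bullet> (w - p)" by simp
  also have "\<dots> = w \<bullet> w - 2 * (p \<bullet> w) + p \<bullet> p"
    by (simp add: inner_diff_left inner_diff_right inner_commute)
  finally show ?thesis using pw pp by simp
qed

lemma orthonormal_set_bessel:
  "orthonormal_set B \<Longrightarrow> (\<Sum>b\<in>B. (b \<bullet> w)\<^sup>2) \<le> w \<bullet> w"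
  using bessel_inequality[of B id w] by (simp add: orthonormal_set_def)

lemma orthonormal_set_expansion:
  assumes B: "orthonormal_set B" and y: "y \<in> span B"
  shows "y = (\<Sum>b\<in>B. (b \<bullet> y) *\<^sub>R b)"
proof -
  have fin: "finite B" using B by (simp add: orthonormal_set_def)
  obtain u where yu: "y = (\<Sum>b\<in>B. u b *\<^sub>R b)" using y span_finite[OF fin] by auto
  have "b \<bullet> y = u b" if "b \<in> B" for b
  proof -
    have "b \<bullet> y = (\<Sum>b'\<in>B. u b' * (if b = b' then 1 else 0))"
      using B that by (simp add: yu inner_sum_right orthonormal_set_def)
    then show ?thesis using fin that by (simp add: if_distrib cong: if_cong)
  qed
  then show ?thesis by (simp add: yu cong: sum.cong)
qed

lemma orthonormal_set_parseval:
  assumes "orthonormal_set B" and "y \<in> span B"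
  shows "y \<bullet> y = (\<Sum>b\<in>B. (b \<bullet> y)\<^sup>2)"
proof -
  have "y \<bullet> y = (\<Sum>b\<in>B. (b \<bullet> y) *\<^sub>R b) \<bullet> y"
    using orthonormal_set_expansion[OF assms] by simp
  then show ?thesis by (simp add: inner_sum_left power2_eq_square)
qed

lemma orthonormal_set_independent:
  assumes "orthonormal_set B"
  shows "independent B"
proof (rule pairwise_orthogonal_independent)
  show "pairwise orthogonal B"
    using assms by (auto simp: orthonormal_set_def pairwise_def orthogonal_def)
  show "0 \<notin> B"
    using assms by (fastforce simp: orthonormal_set_def)
qed

definition orthonormal_frame :: "(nat \<Rightarrow> real^'n::finite) \<Rightarrow> bool" where
  "orthonormal_frame q \<longleftrightarrow>
     (\<forall>i<CARD('n). \<forall>j<CARD('n). q i \<bullet> q j = (if i = j then 1 else 0))"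

lemma orthonormal_frame_inj:
  fixes q :: "nat \<Rightarrow> real^'n::finite"
  assumes "orthonormal_frame q"
  shows "inj_on q {..<CARD('n)}"
proof (rule inj_onI)
  fix i j assume "i \<in> {..<CARD('n)}" "j \<in> {..<CARD('n)}" "q i = q j"
  then have "q i \<bullet> q j = 1" using assms by (simp add: orthonormal_frame_def)
  then show "i = j" using assms \<open>i \<in> _\<close> \<open>j \<in> _\<close> by (auto simp: orthonormal_frame_def split: if_splits)
qed

lemma orthonormal_frame_set:
  fixes q :: "nat \<Rightarrow> real^'n::finite"
  assumes "orthonormal_frame q" and "A \<subseteq> {..<CARD('n)}"
  shows "orthonormal_set (q ` A)"
proof -
  have "finite A" using assms(2) finite_subset by blast
  moreover have "q i \<bullet> q j = (if q i = q j then 1 else 0)" if "i \<in> A" "j \<in> A" for i j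
    using orthonormal_frame_inj[OF assms(1)] assms that
    by (auto simp: orthonormal_frame_def inj_on_def subset_iff)
  ultimately show ?thesis by (auto simp: orthonormal_set_def)
qed

lemma orthonormal_frame_span:
  fixes q :: "nat \<Rightarrow> real^'n::finite"
  assumes "orthonormal_frame q"
  shows "span (q ` {..<CARD('n)}) = UNIV"
proof -
  have "card (q ` {..<CARD('n)}) = dim (UNIV :: (real^'n) set)"
    using orthonormal_frame_inj[OF assms] by (simp add: card_image)
  then show ?thesis
    using orthonormal_set_independent[OF orthonormal_frame_set[OF assms order_refl]]
    by (metis card_eq_dim finite_imageI finite_lessThan subset_UNIV span_UNIV span_mono subset_antisym)
qed

lemma orthonormal_frame_sum:
  "orthonormal_frame q \<Longrightarrow> (\<Sum>b\<in>q ` {..<CARD('n)}. f b) = (\<Sum>i<CARD('n). f (q i))"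
  for q :: "nat \<Rightarrow> real^'n::finite"
  by (simp add: sum.reindex orthonormal_frame_inj)

lemma orthonormal_frame_expansion:
  "orthonormal_frame q \<Longrightarrow> v = (\<Sum>i<CARD('n). (q i \<bullet> v) *\<^sub>R q i)"
  for q :: "nat \<Rightarrow> real^'n::finite"
  using orthonormal_set_expansion[OF orthonormal_frame_set[OF _ order_refl], of q v]
  by (simp add: orthonormal_frame_span orthonormal_frame_sum)

lemma orthonormal_frame_parseval:
  "orthonormal_frame q \<Longrightarrow> (\<Sum>i<CARD('n). (q i \<bullet> v)\<^sup>2) = v \<bullet> v"
  for q :: "nat \<Rightarrow> real^'n::finite"
  using orthonormal_set_parseval[OF orthonormal_frame_set[OF _ order_refl], of q v]
  by (simp add: orthonormal_frame_span orthonormal_frame_sum)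

section \<open>Spectral sums\<close>

lemma outer_mult_vec: "outer a *v v = (a \<bullet> v) *\<^sub>R a"
  by (simp add: outer_def vec_eq_iff matrix_vector_mult_def inner_vec_def sum_distrib_left
      mult.commute mult.left_commute)

lemma sum_scaleR_matrix_vector_mult:
  "(\<Sum>i\<in>I. c i *\<^sub>R (B i :: real^'n::finite^'m::finite)) *v v = (\<Sum>i\<in>I. c i *\<^sub>R (B i *v v))"
  by (induction I rule: infinite_finite_induct)
    (simp_all add: matrix_vector_mult_add_rdistrib scaleR_matrix_vector_assoc)

definition spectral_sum :: "(nat \<Rightarrow> real^'n::finite) \<Rightarrow> (nat \<Rightarrow> real) \<Rightarrow> real^'n^'n" where
  "spectral_sum q d = (\<Sum>i<CARD('n). d i *\<^sub>R outer (q i))"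

lemma spectral_sum_mult_vec:
  "spectral_sum q d *v v = (\<Sum>i<CARD('n). (d i * (q i \<bullet> v)) *\<^sub>R q i)"
  for q :: "nat \<Rightarrow> real^'n::finite"
  by (simp add: spectral_sum_def sum_scaleR_matrix_vector_mult outer_mult_vec)

lemma spectral_sum_quadratic_form:
  "v \<bullet> (spectral_sum q d *v v) = (\<Sum>i<CARD('n). d i * (q i \<bullet> v)\<^sup>2)"
  for q :: "nat \<Rightarrow> real^'n::finite"
  by (simp add: spectral_sum_mult_vec inner_sum_right power2_eq_square inner_commute mult.assoc)

lemma spectral_sum_eigenvector:
  fixes q :: "nat \<Rightarrow> real^'n::finite"
  assumes "orthonormal_frame q" and "k < CARD('n)"
  shows "spectral_sum q d *v q k = d k *\<^sub>R q k"
proof -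
  have "spectral_sum q d *v q k = (\<Sum>i<CARD('n). (if i = k then d k *\<^sub>R q k else 0))"
    unfolding spectral_sum_mult_vec
    by (rule sum.cong) (use assms in \<open>auto simp: orthonormal_frame_def\<close>)
  then show ?thesis using assms(2) by simp
qed

lemma spectral_sum_diagonal:
  fixes q :: "nat \<Rightarrow> real^'n::finite"
  assumes "orthonormal_frame q" and "k < CARD('n)"
  shows "q k \<bullet> (spectral_sum q d *v q k) = d k"
  using assms by (simp add: spectral_sum_eigenvector orthonormal_frame_def)

lemma spectral_sum_linear:
  "spectral_sum q (\<lambda>i. a * d i + b * e i) = a *\<^sub>R spectral_sum q d + b *\<^sub>R spectral_sum q e"
  by (simp add: spectral_sum_def scaleR_add_left sum.distrib scaleR_sum_right)

lemma spectral_sum_const: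
  fixes q :: "nat \<Rightarrow> real^'n::finite"
  assumes "orthonormal_frame q"
  shows "spectral_sum q (\<lambda>_. a) = mat a"
proof -
  have "spectral_sum q (\<lambda>_. a) *v v = a *\<^sub>R (\<Sum>i<CARD('n). (q i \<bullet> v) *\<^sub>R q i)" for v
    by (simp add: spectral_sum_mult_vec scaleR_sum_right)
  also have "\<dots> v = mat a *v v" for v
  proof -
    have "mat a = a *\<^sub>R (mat 1 :: real^'n^'n)" by (simp add: vec_eq_iff mat_def)
    then show ?thesis by (simp flip: orthonormal_frame_expansion[OF assms] scaleR_matrix_vector_assoc)
  qed
  finally show ?thesis by (simp add: matrix_eq)
qed

lemma spectral_sum_add_scaled_id:
  "orthonormal_frame q \<Longrightarrow> spectral_sum q d + t *\<^sub>R mat 1 = spectral_sum q (\<lambda>i. d i + t)"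
  using spectral_sum_linear[of q 1 d t "\<lambda>_. 1"] by (simp add: spectral_sum_const)

lemma mat_minus_spectral_sum:
  "orthonormal_frame q \<Longrightarrow> mat x - spectral_sum q d = spectral_sum q (\<lambda>i. x - d i)"
  using spectral_sum_linear[of q x "\<lambda>_. 1" "-1" d]
  by (simp add: spectral_sum_const vec_eq_iff mat_def)

lemma symmetric_spectral_sum: "symmetric_mat (spectral_sum q d)"
  by (simp add: symmetric_mat_def spectral_sum_def vec_eq_iff transpose_def outer_def mult.commute)

lemma psd_spectral_sum:
  "(\<And>i. i < CARD('n) \<Longrightarrow> 0 \<le> d i) \<Longrightarrow> psd (spectral_sum q d)"
  for q :: "nat \<Rightarrow> real^'n::finite"
  by (auto simp: psd_def symmetric_spectral_sum spectral_sum_quadratic_form intro!: sum_nonneg)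

lemma psd_spectral_sum_nonneg:
  fixes q :: "nat \<Rightarrow> real^'n::finite"
  assumes "orthonormal_frame q" and "psd (spectral_sum q d)" and "k < CARD('n)"
  shows "0 \<le> d k"
  using assms spectral_sum_diagonal[OF assms(1,3), of d] by (metis psd_def)

lemma det_spectral_sum:
  fixes q :: "nat \<Rightarrow> real^'n::finite"
  assumes q: "orthonormal_frame q"
  shows "det (spectral_sum q d) = (\<Prod>i<CARD('n). d i)"
proof -
  obtain r :: "'n \<Rightarrow> nat" where r: "bij_betw r UNIV {..<CARD('n)}"
    using ex_bij_betw_finite_nat[of "UNIV :: 'n set"] by (auto simp: atLeast0LessThan)
  define Q :: "real^'n^'n" where "Q = (\<chi> a. q (r a))"
  define D :: "(nat \<Rightarrow> real) \<Rightarrow> real^'n^'n" where "D e = (\<chi> a b. if a = b then e (r a) else 0)" for e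
  have conj: "spectral_sum q e = transpose Q ** D e ** Q" for e
  proof -
    have "spectral_sum q e $ u $ v = (\<Sum>a\<in>UNIV. e (r a) * (q (r a) $ u * q (r a) $ v))" for u v
      using sum.reindex_bij_betw[OF r, of "\<lambda>i. e i * (q i $ u * q i $ v)"]
      by (simp add: spectral_sum_def outer_def)
    then show ?thesis
      by (simp add: vec_eq_iff matrix_matrix_mult_def transpose_def Q_def D_def if_distrib mult_ac
          cong: if_cong)
  qed
  have "D (\<lambda>_. 1) = mat 1" by (simp add: D_def mat_def vec_eq_iff)
  then have "transpose Q ** Q = mat 1"
    using conj[of "\<lambda>_. 1"] spectral_sum_const[OF q, of 1] by (simp add: matrix_mul_rid)
  then have "det (transpose Q) * det Q = 1"
    by (metis det_I det_mul)
  moreover have "det (D d) = (\<Prod>a\<in>UNIV. d (r a))"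
    by (subst det_diagonal) (auto simp: D_def)
  ultimately have "det (spectral_sum q d) = (\<Prod>a\<in>UNIV. d (r a))"
    by (simp add: conj det_mul)
  also have "\<dots> = (\<Prod>i<CARD('n). d i)" using prod.reindex_bij_betw[OF r, of d] by simp
  finally show ?thesis .
qed

lemma proots_prod_linear_factors: "proots (\<Prod>a\<in>#M. [:- a, 1:]) = (M :: real multiset)"
proof (induction M)
  case (add a M)
  have "(\<Prod>b\<in>#M. [:- b, 1:]) \<noteq> 0" by (auto simp: prod_mset_zero_iff)
  then have "proots ([:- a, 1:] * (\<Prod>b\<in>#M. [:- b, 1:])) = proots [:- a, 1:] + M"
    by (simp add: proots_mult add.IH del: mult_pCons_left)
  then show ?case by (simp del: mult_pCons_left)
qed simp

lemma eig_mset_spectral_sum: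
  fixes q :: "nat \<Rightarrow> real^'n::finite"
  assumes q: "orthonormal_frame q"
  shows "eig_mset (spectral_sum q d) = image_mset d (mset_set {..<CARD('n)})"
proof -
  let ?M = "image_mset d (mset_set {..<CARD('n)})"
  have charpoly: "det (mat x - spectral_sum q d) = (\<Prod>a\<in>#?M. x - a)" for x
    by (simp add: mat_minus_spectral_sum[OF q] det_spectral_sum[OF q]
        prod_unfold_prod_mset multiset.map_comp o_def)
  have "N = ?M" if "\<forall>x. det (mat x - spectral_sum q d) = (\<Prod>a\<in>#N. x - a)" for N
  proof -
    have "poly (\<Prod>a\<in>#N. [:- a, 1:]) = poly (\<Prod>a\<in>#?M. [:- a, 1:])"
      using that charpoly by (simp add: fun_eq_iff poly_prod_mset)
    then show ?thesis by (metis poly_eq_poly_eq_iff proots_prod_linear_factors)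
  qed
  then show ?thesis unfolding eig_mset_def using charpoly by (intro the_equality) auto
qed

section \<open>The spectral theorem\<close>

lemma symmetric_mat_inner_commute:
  fixes X :: "real^'n::finite^'n"
  assumes "symmetric_mat X"
  shows "(X *v a) \<bullet> b = a \<bullet> (X *v b)"
  using assms by (metis dot_lmul_matrix symmetric_mat_def transpose_matrix_vector inner_commute)

lemma rayleigh_maximum_exists:
  fixes X :: "real^'n::finite^'n"
  assumes U: "subspace U" and u: "u \<in> U" "u \<noteq> 0"
  obtains w where "w \<in> U" "w \<bullet> w = 1" "\<And>v. v \<in> U \<Longrightarrow> v \<bullet> (X *v v) \<le> (w \<bullet> (X *v w)) * (v \<bullet> v)"
proof -
  define K where "K = U \<inter> sphere 0 1"
  have "compact K"
    unfolding K_def using U by (intro closed_Int_compact closed_subspace) auto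
  moreover have "u /\<^sub>R norm u \<in> K" using U u by (simp add: K_def subspace_scale)
  then have "K \<noteq> {}" by blast
  moreover have "continuous_on K (\<lambda>v. v \<bullet> (X *v v))"
    by (intro continuous_on_inner continuous_on_id matrix_vector_mult_linear_continuous_on)
  ultimately obtain w where w: "w \<in> K" and wmax: "\<And>v. v \<in> K \<Longrightarrow> v \<bullet> (X *v v) \<le> w \<bullet> (X *v w)"
    using continuous_attains_sup[of K "\<lambda>v. v \<bullet> (X *v v)"] by auto
  have "v \<bullet> (X *v v) \<le> (w \<bullet> (X *v w)) * (v \<bullet> v)" if "v \<in> U" for v
  proof (cases "v = 0")
    case False
    define v' where "v' = v /\<^sub>R norm v"
    have "v' \<in> K" using False that U by (simp add: K_def v'_def subspace_scale)
    then have "v' \<bullet> (X *v v') \<le> w \<bullet> (X *v w)" by (rule wmax)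
    moreover have "v' \<bullet> (X *v v') = (v \<bullet> (X *v v)) / (v \<bullet> v)"
      using False by (simp add: v'_def matrix_vector_mult_scaleR dot_square_norm power2_eq_square divide_inverse)
    ultimately show ?thesis using False by (simp add: divide_le_eq)
  qed simp
  moreover have "w \<in> U" "w \<bullet> w = 1" using w by (auto simp: K_def dot_square_norm)
  ultimately show thesis using that by blast
qed

lemma nonpos_if_perturbations_nonpos:
  fixes a c :: real
  assumes "\<And>e. 0 < e \<Longrightarrow> a + e * c \<le> 0"
  shows "a \<le> 0"
proof (rule ccontr)
  assume "\<not> a \<le> 0"
  define e where "e = a / (\<bar>c\<bar> + 1)"
  have e: "0 < e" using \<open>\<not> a \<le> 0\<close> by (simp add: e_def)
  have "- (e * c) \<le> e * \<bar>c\<bar>" using mult_left_mono[OF abs_ge_minus_self[of c], of e] e by simp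
  also have "\<dots> < a" using \<open>\<not> a \<le> 0\<close> by (simp add: e_def field_simps)
  finally show False using assms[OF e] by linarith
qed

lemma rayleigh_maximizer_eigenvector:
  fixes X :: "real^'n::finite^'n"
  assumes sym: "symmetric_mat X" and U: "subspace U" and inv: "\<And>v. v \<in> U \<Longrightarrow> X *v v \<in> U"
    and w: "w \<in> U" "w \<bullet> w = 1"
    and max: "\<And>v. v \<in> U \<Longrightarrow> v \<bullet> (X *v v) \<le> (w \<bullet> (X *v w)) * (v \<bullet> v)"
  shows "X *v w = (w \<bullet> (X *v w)) *\<^sub>R w"
proof -
  define l where "l = w \<bullet> (X *v w)"
  define y where "y = X *v w - l *\<^sub>R w"
  define c where "c = y \<bullet> (X *v y) - l * (y \<bullet> y)"
  have "y \<in> U" using U inv w by (simp add: y_def subspace_diff subspace_scale)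
  have wXy: "w \<bullet> (X *v y) = y \<bullet> y + l * (y \<bullet> w)"
    using symmetric_mat_inner_commute[OF sym, of w y] by (simp add: y_def inner_diff_left inner_commute)
  have expand: "(w + e *\<^sub>R y) \<bullet> (X *v (w + e *\<^sub>R y)) - l * ((w + e *\<^sub>R y) \<bullet> (w + e *\<^sub>R y))
      = 2 * e * (y \<bullet> y) + e\<^sup>2 * c" for e
  proof -
    have "y \<bullet> (X *v w) = w \<bullet> (X *v y)"
      using symmetric_mat_inner_commute[OF sym, of w y] by (simp add: inner_commute)
    then have "(w + e *\<^sub>R y) \<bullet> (X *v (w + e *\<^sub>R y)) = l + 2 * e * (w \<bullet> (X *v y)) + e\<^sup>2 * (y \<bullet> (X *v y))"
      by (simp add: l_def matrix_vector_right_distrib matrix_vector_mult_scaleR inner_add_left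
          inner_add_right power2_eq_square algebra_simps)
    moreover have "(w + e *\<^sub>R y) \<bullet> (w + e *\<^sub>R y) = 1 + 2 * e * (y \<bullet> w) + e\<^sup>2 * (y \<bullet> y)"
      using w(2) by (simp add: inner_add_left inner_add_right power2_eq_square inner_commute
          algebra_simps)
    ultimately show ?thesis
      by (simp add: wXy c_def w(2) inner_commute[of w y] power2_eq_square algebra_simps)
  qed
  have "2 * (y \<bullet> y) + e * c \<le> 0" if e: "e > 0" for e
  proof -
    have "e * (2 * (y \<bullet> y) + e * c) \<le> 0"
      using max[of "w + e *\<^sub>R y"] U \<open>y \<in> U\<close> w(1) expand[of e]
      by (simp add: l_def subspace_add subspace_scale power2_eq_square algebra_simps)
    then show ?thesis using e by (simp add: mult_le_0_iff)
  qed
  then have "2 * (y \<bullet> y) \<le> 0" by (rule nonpos_if_perturbations_nonpos)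
  then have "y \<bullet> y = 0" using inner_ge_zero[of y] by linarith
  then show ?thesis by (simp add: y_def l_def)
qed

lemma exists_nonzero_orthogonal:
  fixes q :: "nat \<Rightarrow> real^'n::finite"
  assumes "k < CARD('n)"
  obtains u where "u \<noteq> 0" "\<And>j. j < k \<Longrightarrow> q j \<bullet> u = 0"
proof -
  have "dim (q ` {..<k}) \<le> card (q ` {..<k})" by (rule dim_le_card) (auto intro: span_base)
  also have "\<dots> < DIM(real^'n)" using card_image_le[of "{..<k}" q] assms by simp
  finally obtain u :: "real^'n" where "u \<noteq> 0" and u: "\<And>y. y \<in> span (q ` {..<k}) \<Longrightarrow> orthogonal y u"
    using orthogonal_to_subspace_exists orthogonal_commute by metis
  then show thesis using that u[OF span_base] by (simp add: orthogonal_def)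
qed

lemma symmetric_eigenvectors_partial:
  fixes X :: "real^'n::finite^'n"
  assumes sym: "symmetric_mat X" and "k \<le> CARD('n)"
  shows "\<exists>q lam. (\<forall>i<k. \<forall>j<k. q i \<bullet> q j = (if i = j then 1 else 0)) \<and>
     (\<forall>i<k. X *v q i = lam i *\<^sub>R q i) \<and>
     (\<forall>i<k. \<forall>v. (\<forall>j<i. q j \<bullet> v = 0) \<longrightarrow> v \<bullet> (X *v v) \<le> lam i * (v \<bullet> v))"
  using assms(2)
proof (induction k)
  case (Suc k)
  then obtain q lam where
    orth: "\<forall>i<k. \<forall>j<k. q i \<bullet> q j = (if i = j then 1 else 0)" and
    eig: "\<forall>i<k. X *v q i = lam i *\<^sub>R q i" and
    max: "\<forall>i<k. \<forall>v. (\<forall>j<i. q j \<bullet> v = 0) \<longrightarrow> v \<bullet> (X *v v) \<le> lam i * (v \<bullet> v)"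
    by auto
  define U where "U = {v. \<forall>j<k. q j \<bullet> v = 0}"
  have U: "subspace U" by (auto simp: subspace_def U_def inner_add_right)
  have inv: "X *v v \<in> U" if "v \<in> U" for v
  proof -
    have "q j \<bullet> (X *v v) = lam j * (q j \<bullet> v)" if "j < k" for j
      using eig that symmetric_mat_inner_commute[OF sym, of "q j" v] by simp
    then show ?thesis using \<open>v \<in> U\<close> by (simp add: U_def)
  qed
  obtain u where "u \<noteq> 0" "\<And>j. j < k \<Longrightarrow> q j \<bullet> u = 0"
    using exists_nonzero_orthogonal[of k q] Suc.prems by auto
  then have "u \<in> U" "u \<noteq> 0" by (simp_all add: U_def)
  then obtain w where w: "w \<in> U" "w \<bullet> w = 1"
    and wmax: "\<And>v. v \<in> U \<Longrightarrow> v \<bullet> (X *v v) \<le> (w \<bullet> (X *v w)) * (v \<bullet> v)"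
    using rayleigh_maximum_exists[OF U \<open>u \<in> U\<close> \<open>u \<noteq> 0\<close>, of X] by blast
  have weig: "X *v w = (w \<bullet> (X *v w)) *\<^sub>R w"
    by (rule rayleigh_maximizer_eigenvector[OF sym U inv w wmax])
  show ?case
  proof (intro exI[of _ "q(k := w)"] exI[of _ "lam(k := w \<bullet> (X *v w))"] conjI allI impI)
    fix i j assume "i < Suc k" "j < Suc k"
    then show "(q(k := w)) i \<bullet> (q(k := w)) j = (if i = j then 1 else 0)"
      using orth w by (auto simp: U_def less_Suc_eq inner_commute)
  next
    fix i assume "i < Suc k"
    then show "X *v (q(k := w)) i = (lam(k := w \<bullet> (X *v w))) i *\<^sub>R (q(k := w)) i"
      using eig weig by (auto simp: less_Suc_eq)
  next
    fix i v assume "i < Suc k" and "\<forall>j<i. (q(k := w)) j \<bullet> v = 0"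
    then show "v \<bullet> (X *v v) \<le> (lam(k := w \<bullet> (X *v w))) i * (v \<bullet> v)"
      using max wmax by (cases "i = k") (auto simp: U_def)
  qed
qed simp

theorem symmetric_spectral_decomposition:
  fixes X :: "real^'n::finite^'n"
  assumes sym: "symmetric_mat X"
  obtains q lam where "orthonormal_frame q"
    "\<And>i j. i \<le> j \<Longrightarrow> j < CARD('n) \<Longrightarrow> lam j \<le> lam i" "X = spectral_sum q lam"
proof -
  obtain q lam where
    orth: "\<forall>i<CARD('n). \<forall>j<CARD('n). q i \<bullet> q j = (if i = j then 1 else 0)" and
    eig: "\<forall>i<CARD('n). X *v q i = lam i *\<^sub>R q i" and
    max: "\<forall>i<CARD('n). \<forall>v. (\<forall>j<i. q j \<bullet> v = 0) \<longrightarrow> v \<bullet> (X *v v) \<le> lam i * (v \<bullet> v)"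
    using symmetric_eigenvectors_partial[OF sym order_refl] by blast
  have q: "orthonormal_frame q" using orth by (simp add: orthonormal_frame_def)
  have "lam j \<le> lam i" if "i \<le> j" "j < CARD('n)" for i j
    using max[rule_format, of i "q j"] eig orth that by auto
  moreover have "X = spectral_sum q lam"
  proof (rule matrix_eq[THEN iffD2], intro allI)
    fix v :: "real^'n"
    have "X *v v = X *v (\<Sum>i<CARD('n). (q i \<bullet> v) *\<^sub>R q i)"
      using orthonormal_frame_expansion[OF q, of v] by simp
    also have "\<dots> = spectral_sum q lam *v v"
      using eig by (simp add: spectral_sum_mult_vec vec.sum matrix_vector_mult_scaleR mult.commute)
    finally show "X *v v = spectral_sum q lam *v v" .
  qed
  ultimately show thesis using that q by blast
qed

section \<open>The matrices M(x)\<close>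

lemma matrix_vector_mult_inner_transpose:
  "(A *v w) \<bullet> v = w \<bullet> (transpose A *v v)" for A :: "real^'n::finite^'m::finite"
  by (metis dot_lmul_matrix inner_commute transpose_matrix_vector)

lemma transpose_mult_vec_nth: "(transpose A *v v) $ i = column i A \<bullet> v"
  for A :: "real^'n::finite^'m::finite"
  by (simp add: matrix_vector_mult_def transpose_def column_def inner_vec_def mult.commute)

lemma M_of_mult_vec: "M_of A x *v v = (\<Sum>i\<in>UNIV. (x $ i * (column i A \<bullet> v)) *\<^sub>R column i A)"
  by (simp add: M_of_def sum_scaleR_matrix_vector_mult outer_mult_vec)

lemma symmetric_M_of: "symmetric_mat (M_of A x)"
  by (simp add: symmetric_mat_def M_of_def vec_eq_iff transpose_def outer_def mult.commute)

text \<open>\<open>sqrt_weight x\<close> is multiplication by \<open>D = diag (sqrt x)\<close>, so that \<open>M_of A x = (A D) (A D)\<^sup>T\<close>;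
  its Gram matrix \<open>D A\<^sup>T A D\<close> is where \<open>A0\<^sup>T A0 = At\<^sup>T At + t I\<close> enters.\<close>

definition sqrt_weight :: "real^'n::finite \<Rightarrow> real^'n \<Rightarrow> real^'n" where
  "sqrt_weight x v = (\<chi> i. sqrt (x $ i) * v $ i)"

lemma inner_sqrt_weight_commute: "sqrt_weight x a \<bullet> b = a \<bullet> sqrt_weight x b"
  by (simp add: sqrt_weight_def inner_vec_def mult_ac)

lemma M_of_quadratic_form_sum:
  "v \<bullet> (M_of A x *v v) = (\<Sum>i\<in>UNIV. x $ i * (column i A \<bullet> v)\<^sup>2)"
  by (simp add: M_of_mult_vec inner_sum_right inner_commute mult_ac power2_eq_square)

lemma M_of_quadratic_form:
  assumes "\<And>i. 0 \<le> x $ i"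
  shows "v \<bullet> (M_of A x *v v) = sqrt_weight x (transpose A *v v) \<bullet> sqrt_weight x (transpose A *v v)"
proof -
  have sq: "sqrt (x $ i) * a * (sqrt (x $ i) * a) = x $ i * a\<^sup>2" for i a
    using assms[of i] by (simp add: mult_ac power2_eq_square flip: real_sqrt_mult)
  have "v \<bullet> (M_of A x *v v) = (\<Sum>i\<in>UNIV. x $ i * ((transpose A *v v) $ i)\<^sup>2)"
    by (simp only: M_of_quadratic_form_sum transpose_mult_vec_nth)
  also have "\<dots> = sqrt_weight x (transpose A *v v) \<bullet> sqrt_weight x (transpose A *v v)"
    unfolding sqrt_weight_def inner_vec_def by (simp add: sq)
  finally show ?thesis .
qed

lemma psd_M_of: "(\<And>i. 0 \<le> x $ i) \<Longrightarrow> psd (M_of A x)"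
  by (simp add: psd_def symmetric_M_of M_of_quadratic_form)

lemma sqrt_weight_inner_self_le:
  assumes "\<And>i. 0 \<le> x $ i \<and> x $ i \<le> 1"
  shows "sqrt_weight x v \<bullet> sqrt_weight x v \<le> v \<bullet> v"
  unfolding sqrt_weight_def inner_vec_def
proof (rule sum_mono)
  fix i
  have "sqrt (x $ i) * v $ i * (sqrt (x $ i) * v $ i) = x $ i * (v $ i * v $ i)"
    using assms[of i] by (simp add: mult_ac flip: real_sqrt_mult)
  also have "\<dots> \<le> v $ i * v $ i" using assms[of i] by (simp add: mult_left_le_one_le)
  finally show "(\<chi> i. sqrt (x $ i) * v $ i) $ i \<bullet> (\<chi> i. sqrt (x $ i) * v $ i) $ i \<le> v $ i \<bullet> v $ i"
    by simp
qed

section \<open>Ky Fan inequalities\<close>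

lemma sum_lessThan_split:
  "a \<le> b \<Longrightarrow> (\<Sum>k<b. f k) = (\<Sum>k<a. f k) + (\<Sum>k\<in>{a..<b}. f k)"
  for f :: "nat \<Rightarrow> 'a::comm_monoid_add"
  by (metis atLeast0LessThan sum.atLeastLessThan_concat zero_le)

lemma weighted_sum_le_top_sum:
  fixes lam c :: "nat \<Rightarrow> real"
  assumes desc: "\<And>i j. i \<le> j \<Longrightarrow> j < n \<Longrightarrow> lam j \<le> lam i"
    and nonneg: "\<And>i. i < n \<Longrightarrow> 0 \<le> lam i"
    and c: "\<And>i. i < n \<Longrightarrow> 0 \<le> c i \<and> c i \<le> 1"
    and csum: "(\<Sum>i<n. c i) \<le> real m" and mn: "m \<le> n"
  shows "(\<Sum>i<n. lam i * c i) \<le> (\<Sum>i<m. lam i)"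
proof (cases "m = n")
  case True
  have "(\<Sum>i<n. lam i * c i) \<le> (\<Sum>i<n. lam i)"
    by (rule sum_mono) (use nonneg c in \<open>auto intro: mult_left_le\<close>)
  then show ?thesis using True by simp
next
  case False
  then have m: "m < n" using mn by simp
  define a where "a = lam m"
  have head: "lam i * (c i - 1) \<le> a * (c i - 1)" if "i < m" for i
    using desc[of i m] c[of i] that m by (intro mult_right_mono_neg) (auto simp: a_def)
  have tail: "lam i * c i \<le> a * c i" if "i \<in> {m..<n}" for i
    using desc[of m i] c[of i] that by (intro mult_right_mono) (auto simp: a_def)
  have "(\<Sum>i<n. lam i * c i) - (\<Sum>i<m. lam i)
      = (\<Sum>i<m. lam i * (c i - 1)) + (\<Sum>i\<in>{m..<n}. lam i * c i)"
    using mn by (simp add: sum_lessThan_split[of m n] algebra_simps sum_subtractf)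
  also have "\<dots> \<le> (\<Sum>i<m. a * (c i - 1)) + (\<Sum>i\<in>{m..<n}. a * c i)"
    by (intro add_mono sum_mono head tail) auto
  also have "\<dots> = a * ((\<Sum>i<n. c i) - real m)"
    using mn by (simp add: sum_lessThan_split[of m n] algebra_simps sum_subtractf sum_distrib_left)
  also have "\<dots> \<le> 0"
    using csum nonneg[OF m] by (simp add: a_def mult_nonneg_nonpos)
  finally show ?thesis by simp
qed

lemma ky_fan_orthonormal_set:
  fixes p :: "nat \<Rightarrow> real^'n::finite"
  assumes p: "orthonormal_frame p"
    and desc: "\<And>i j. i \<le> j \<Longrightarrow> j < CARD('n) \<Longrightarrow> mu j \<le> mu i"
    and nonneg: "\<And>i. i < CARD('n) \<Longrightarrow> 0 \<le> mu i"
    and B: "orthonormal_set B" and card: "card B \<le> m" and mn: "m \<le> CARD('n)"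
  shows "(\<Sum>b\<in>B. b \<bullet> (spectral_sum p mu *v b)) \<le> (\<Sum>k<m. mu k)"
proof -
  define c where "c k = (\<Sum>b\<in>B. (p k \<bullet> b)\<^sup>2)" for k
  have c: "0 \<le> c k \<and> c k \<le> 1" if "k < CARD('n)" for k
  proof
    show "0 \<le> c k" by (simp add: c_def sum_nonneg)
    have "c k \<le> p k \<bullet> p k"
      using orthonormal_set_bessel[OF B, of "p k"] by (simp add: c_def inner_commute)
    also have "\<dots> = 1" using p that by (simp add: orthonormal_frame_def)
    finally show "c k \<le> 1" .
  qed
  have "(\<Sum>k<CARD('n). c k) = (\<Sum>b\<in>B. \<Sum>k<CARD('n). (p k \<bullet> b)\<^sup>2)"
    unfolding c_def by (rule sum.swap)
  also have "\<dots> = (\<Sum>b\<in>B. 1)"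
    using B by (intro sum.cong) (simp_all add: orthonormal_frame_parseval[OF p] orthonormal_set_def)
  finally have csum: "(\<Sum>k<CARD('n). c k) \<le> real m" using card by simp
  have "(\<Sum>b\<in>B. b \<bullet> (spectral_sum p mu *v b)) = (\<Sum>k<CARD('n). mu k * c k)"
    by (simp add: spectral_sum_quadratic_form c_def sum_distrib_left) (rule sum.swap)
  also have "\<dots> \<le> (\<Sum>k<m. mu k)"
    by (rule weighted_sum_le_top_sum[OF desc nonneg c csum mn])
  finally show ?thesis .
qed

lemma orthonormal_set_dominating_sum_norms:
  fixes y :: "'i \<Rightarrow> 'a::euclidean_space"
  assumes I: "finite I" and dom: "\<And>v. (\<Sum>i\<in>I. (y i \<bullet> v)\<^sup>2) \<le> Q v"
  obtains B where "orthonormal_set B" "card B \<le> card I" "(\<Sum>i\<in>I. y i \<bullet> y i) \<le> (\<Sum>b\<in>B. Q b)"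
proof -
  obtain B where B: "B \<subseteq> span (y ` I)" "pairwise orthogonal B" "\<And>x. x \<in> B \<Longrightarrow> norm x = 1"
    "independent B" "card B = dim (span (y ` I))" "span B = span (y ` I)"
    using orthonormal_basis_subspace[of "span (y ` I)"] by auto
  have oB: "orthonormal_set B"
    using B(2,3) finiteI_independent[OF B(4)]
    by (auto simp: orthonormal_set_def pairwise_def orthogonal_def dot_square_norm)
  have "card B = dim (y ` I)" using B(5) by simp
  also have "\<dots> \<le> card (y ` I)" by (rule dim_le_card) (use I in \<open>auto intro: span_base\<close>)
  also have "\<dots> \<le> card I" using I by (rule card_image_le)
  finally have cB: "card B \<le> card I" .
  have "(\<Sum>i\<in>I. y i \<bullet> y i) = (\<Sum>i\<in>I. \<Sum>b\<in>B. (b \<bullet> y i)\<^sup>2)"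
    using B(6) by (intro sum.cong refl orthonormal_set_parseval[OF oB]) (auto intro: span_base)
  also have "\<dots> = (\<Sum>b\<in>B. \<Sum>i\<in>I. (y i \<bullet> b)\<^sup>2)"
    by (subst sum.swap) (simp add: inner_commute)
  also have "\<dots> \<le> (\<Sum>b\<in>B. Q b)" by (intro sum_mono dom)
  finally show ?thesis using that oB cB by blast
qed

lemma ky_fan_sum_norms:
  fixes p :: "nat \<Rightarrow> real^'n::finite" and y :: "'i \<Rightarrow> real^'n"
  assumes p: "orthonormal_frame p"
    and desc: "\<And>i j. i \<le> j \<Longrightarrow> j < CARD('n) \<Longrightarrow> mu j \<le> mu i"
    and nonneg: "\<And>i. i < CARD('n) \<Longrightarrow> 0 \<le> mu i"
    and I: "finite I" "card I \<le> m" and mn: "m \<le> CARD('n)"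
    and dom: "\<And>v. (\<Sum>i\<in>I. (y i \<bullet> v)\<^sup>2) \<le> v \<bullet> (spectral_sum p mu *v v)"
  shows "(\<Sum>i\<in>I. y i \<bullet> y i) \<le> (\<Sum>k<m. mu k)"
proof -
  obtain B where B: "orthonormal_set B" "card B \<le> card I"
    and le: "(\<Sum>i\<in>I. y i \<bullet> y i) \<le> (\<Sum>b\<in>B. b \<bullet> (spectral_sum p mu *v b))"
    using orthonormal_set_dominating_sum_norms[OF I(1) dom] by blast
  have "card B \<le> m" using B(2) I(2) by simp
  then have "(\<Sum>b\<in>B. b \<bullet> (spectral_sum p mu *v b)) \<le> (\<Sum>k<m. mu k)"
    using p desc nonneg B(1) mn by (intro ky_fan_orthonormal_set[of p mu B m])
  with le show ?thesis by linarith
qed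

lemma M_of_top_eigenvalues_le_orthonormal_sum:
  fixes A :: "real^'n::finite^'n"
  assumes x: "\<And>i. 0 \<le> x $ i" and q: "orthonormal_frame q" and M: "M_of A x = spectral_sum q lam"
    and mn: "m \<le> CARD('n)"
  obtains B where "orthonormal_set B" "card B \<le> m"
    "(\<Sum>k<m. lam k) \<le> (\<Sum>b\<in>B. (A *v sqrt_weight x b) \<bullet> (A *v sqrt_weight x b))"
proof -
  let ?W = "sqrt_weight x"
  define y where "y k = ?W (transpose A *v q k)" for k
  have lam: "lam k = y k \<bullet> y k" if "k < m" for k
  proof -
    have "lam k = q k \<bullet> (M_of A x *v q k)"
      using spectral_sum_diagonal[OF q, of k lam] that mn by (simp add: M)
    then show ?thesis unfolding y_def by (simp only: M_of_quadratic_form[OF x])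
  qed
  have "(\<Sum>k\<in>{..<m}. (y k \<bullet> v)\<^sup>2) \<le> (A *v ?W v) \<bullet> (A *v ?W v)" for v
  proof -
    have "y k \<bullet> v = q k \<bullet> (A *v ?W v)" for k
      unfolding y_def inner_sqrt_weight_commute
      by (simp only: matrix_vector_mult_inner_transpose transpose_transpose)
    then show ?thesis
      using bessel_inequality[of "{..<m}" q "A *v ?W v"] q mn by (simp add: orthonormal_frame_def)
  qed
  then obtain B where "orthonormal_set B" "card B \<le> m"
    "(\<Sum>k\<in>{..<m}. y k \<bullet> y k) \<le> (\<Sum>b\<in>B. (A *v ?W b) \<bullet> (A *v ?W b))"
    using orthonormal_set_dominating_sum_norms[of "{..<m}" y "\<lambda>v. (A *v ?W v) \<bullet> (A *v ?W v)"]
    by auto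
  then show thesis using that lam by simp
qed

lemma M_of_orthonormal_sum_le_top_eigenvalues:
  fixes A :: "real^'n::finite^'n"
  assumes x: "\<And>i. 0 \<le> x $ i" and p: "orthonormal_frame p" and M: "M_of A x = spectral_sum p mu"
    and desc: "\<And>i j. i \<le> j \<Longrightarrow> j < CARD('n) \<Longrightarrow> mu j \<le> mu i"
    and nonneg: "\<And>i. i < CARD('n) \<Longrightarrow> 0 \<le> mu i"
    and B: "orthonormal_set B" "card B \<le> m" and mn: "m \<le> CARD('n)"
  shows "(\<Sum>b\<in>B. (A *v sqrt_weight x b) \<bullet> (A *v sqrt_weight x b)) \<le> (\<Sum>k<m. mu k)"
proof (rule ky_fan_sum_norms[OF p desc nonneg _ B(2) mn])
  let ?W = "sqrt_weight x"
  show "finite B" using B(1) by (simp add: orthonormal_set_def)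
  fix v
  have "(\<Sum>b\<in>B. ((A *v ?W b) \<bullet> v)\<^sup>2) = (\<Sum>b\<in>B. (b \<bullet> ?W (transpose A *v v))\<^sup>2)"
    by (simp add: matrix_vector_mult_inner_transpose inner_sqrt_weight_commute)
  also have "\<dots> \<le> ?W (transpose A *v v) \<bullet> ?W (transpose A *v v)"
    by (rule orthonormal_set_bessel[OF B(1)])
  also have "\<dots> = v \<bullet> (spectral_sum p mu *v v)"
    by (simp add: M_of_quadratic_form[OF x] flip: M)
  finally show "(\<Sum>b\<in>B. ((A *v ?W b) \<bullet> v)\<^sup>2) \<le> v \<bullet> (spectral_sum p mu *v v)" .
qed

lemma partial_eigenvalue_sums_shift:
  fixes A0 At :: "real^'n::finite^'n" and x :: "real^'n"
  assumes CA: "transpose A0 ** A0 = transpose At ** At + t *\<^sub>R mat 1"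
    and x: "\<And>i. 0 \<le> x $ i \<and> x $ i \<le> 1" and t: "0 \<le> t"
    and q: "orthonormal_frame q" and M0: "M_of A0 x = spectral_sum q lam"
    and p: "orthonormal_frame p" and Mt: "M_of At x = spectral_sum p mu"
    and desc: "\<And>i j. i \<le> j \<Longrightarrow> j < CARD('n) \<Longrightarrow> mu j \<le> mu i"
    and nonneg: "\<And>i. i < CARD('n) \<Longrightarrow> 0 \<le> mu i"
    and mn: "m \<le> CARD('n)"
  shows "(\<Sum>k<m. lam k) \<le> (\<Sum>k<m. mu k) + real m * t"
proof -
  let ?W = "sqrt_weight x"
  have x0: "\<And>i. 0 \<le> x $ i" using x by simp
  obtain B where B: "orthonormal_set B" "card B \<le> m"
    and top: "(\<Sum>k<m. lam k) \<le> (\<Sum>b\<in>B. (A0 *v ?W b) \<bullet> (A0 *v ?W b))"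
    using M_of_top_eigenvalues_le_orthonormal_sum[OF x0 q M0 mn] by blast
  have "(A0 *v w) \<bullet> (A0 *v w) = (At *v w) \<bullet> (At *v w) + t * (w \<bullet> w)" for w
    by (simp add: matrix_vector_mult_inner_transpose matrix_vector_mul_assoc CA
        matrix_vector_mult_add_rdistrib inner_add_right flip: scaleR_matrix_vector_assoc)
  then have "(\<Sum>b\<in>B. (A0 *v ?W b) \<bullet> (A0 *v ?W b))
      = (\<Sum>b\<in>B. (At *v ?W b) \<bullet> (At *v ?W b)) + t * (\<Sum>b\<in>B. ?W b \<bullet> ?W b)"
    by (simp add: sum.distrib sum_distrib_left)
  moreover have "(\<Sum>b\<in>B. (At *v ?W b) \<bullet> (At *v ?W b)) \<le> (\<Sum>k<m. mu k)"
    using x0 p Mt desc nonneg B mn by (rule M_of_orthonormal_sum_le_top_eigenvalues)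
  moreover have "t * (\<Sum>b\<in>B. ?W b \<bullet> ?W b) \<le> real m * t"
  proof -
    have "?W b \<bullet> ?W b \<le> 1" if "b \<in> B" for b
      using sqrt_weight_inner_self_le[OF x, of b] B(1) that by (simp add: orthonormal_set_def)
    then have "(\<Sum>b\<in>B. ?W b \<bullet> ?W b) \<le> (\<Sum>b\<in>B. 1)" by (rule sum_mono)
    then have "(\<Sum>b\<in>B. ?W b \<bullet> ?W b) \<le> real m" using B(2) by simp
    then show ?thesis using t by (simp add: mult.commute mult_left_mono)
  qed
  ultimately show ?thesis using top by linarith
qed

section \<open>Rank\<close>

lemma rank_gram: "rank (transpose A ** A) = rank A" for A :: "real^'n::finite^'m::finite"
proof -
  have "inj_on ((*v) (transpose A)) (span (range ((*v) A)))"
  proof (rule inj_onI)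
    fix a b assume "a \<in> span (range ((*v) A))" "b \<in> span (range ((*v) A))"
      and eq: "transpose A *v a = transpose A *v b"
    moreover have "span (range ((*v) A)) = range ((*v) A)"
      using linear_subspace_image[OF matrix_vector_mul_linear subspace_UNIV, of A] by (simp add: span_eq_iff)
    ultimately obtain ra rb where "a = A *v ra" "b = A *v rb" by auto
    then have r: "a - b = A *v (ra - rb)" by (simp add: matrix_vector_mult_diff_distrib)
    have "(A *v (ra - rb)) \<bullet> (A *v (ra - rb)) = (ra - rb) \<bullet> (transpose A *v (a - b))"
      unfolding r by (rule matrix_vector_mult_inner_transpose)
    also have "\<dots> = 0" using eq by (simp add: matrix_vector_mult_diff_distrib)
    finally show "a = b" using r by simp
  qed
  then have "dim ((*v) (transpose A) ` range ((*v) A)) = dim (range ((*v) A))"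
    by (rule eucl.dim_image_eq[OF matrix_vector_mul_linear])
  moreover have "range ((*v) (transpose A ** A)) = (*v) (transpose A) ` range ((*v) A)"
    by (simp only: image_image matrix_vector_mul_assoc)
  ultimately show ?thesis by (simp only: rank_dim_range)
qed

lemma rank_M_of_le: "rank (M_of A x) \<le> rank A"
proof -
  have "M_of A x *v v = A *v (\<chi> i. x $ i * (column i A \<bullet> v))" for v
    by (simp only: M_of_mult_vec) (simp add: matrix_mult_sum scalar_mult_eq_scaleR)
  then have "range ((*v) (M_of A x)) \<subseteq> range ((*v) A)" by auto
  then show ?thesis by (simp add: rank_dim_range dim_subset)
qed

lemma card_nonzero_eigenvalues_le_rank:
  fixes p :: "nat \<Rightarrow> real^'n::finite"
  assumes p: "orthonormal_frame p"
  shows "card {j. j < CARD('n) \<and> mu j \<noteq> 0} \<le> rank (spectral_sum p mu)"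
proof -
  define J where "J = {j. j < CARD('n) \<and> mu j \<noteq> 0}"
  have "p j \<in> range ((*v) (spectral_sum p mu))" if "j \<in> J" for j
  proof -
    have "p j = spectral_sum p mu *v ((1 / mu j) *\<^sub>R p j)"
      using that spectral_sum_eigenvector[OF p, of j mu] by (simp add: J_def matrix_vector_mult_scaleR)
    then show ?thesis by blast
  qed
  moreover have "independent (p ` J)"
    by (rule orthonormal_set_independent[OF orthonormal_frame_set[OF p]]) (auto simp: J_def)
  ultimately have "card (p ` J) \<le> dim (range ((*v) (spectral_sum p mu)))"
    by (intro independent_card_le_dim) auto
  moreover have "card (p ` J) = card J"
    using orthonormal_frame_inj[OF p] by (intro card_image) (auto simp: J_def intro: inj_on_subset)
  ultimately show ?thesis by (simp add: J_def rank_dim_range)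
qed

lemma eigenvalues_beyond_rank_zero:
  fixes p :: "nat \<Rightarrow> real^'n::finite"
  assumes p: "orthonormal_frame p"
    and desc: "\<And>i j. i \<le> j \<Longrightarrow> j < CARD('n) \<Longrightarrow> mu j \<le> mu i"
    and nonneg: "\<And>i. i < CARD('n) \<Longrightarrow> 0 \<le> mu i"
    and rank: "rank (spectral_sum p mu) \<le> s" and k: "s \<le> k" "k < CARD('n)"
  shows "mu k = 0"
proof (rule ccontr)
  assume "mu k \<noteq> 0"
  then have "0 < mu k" using nonneg[of k] k by simp
  then have "{..k} \<subseteq> {j. j < CARD('n) \<and> mu j \<noteq> 0}"
    using desc k by (fastforce dest: desc[of _ k])
  then have "card {..k} \<le> card {j. j < CARD('n) \<and> mu j \<noteq> 0}"
    by (rule card_mono[rotated]) simp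
  then show False using card_nonzero_eigenvalues_le_rank[OF p, of mu] rank k card_atMost[of k]
    by linarith
qed

section \<open>The concave envelope at a spectral sum\<close>

lemma nth_filter_pos_of_sorted_desc:
  fixes L :: "real list"
  assumes "sorted (rev L)" and "i < length (filter (\<lambda>x. 0 < x) L)"
  shows "L ! i = filter (\<lambda>x. 0 < x) L ! i"
proof -
  have "filter (\<lambda>x. 0 < x) L = takeWhile (\<lambda>x. 0 < x) L"
    using filter_equals_takeWhile_sorted_rev[of id L 0] assms(1) by simp
  then show ?thesis using assms(2) by (simp add: takeWhile_nth)
qed

lemma Phi_eq_sum_ln_positive_eigenvalues:
  fixes Y :: "real^'n::finite^'n" and d :: "nat \<Rightarrow> real"
  assumes eig: "eig_mset Y = image_mset d (mset_set {..<CARD('n)})"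
    and card: "card {i. i < CARD('n) \<and> 0 < d i} = s"
  shows "Phi s Y 0 = ereal (\<Sum>i | i < CARD('n) \<and> 0 < d i. ln (d i))"
proof -
  define L where "L = rev (sort (map d [0..<CARD('n)]))"
  have mxs: "mset (map d [0..<CARD('n)]) = image_mset d (mset_set {..<CARD('n)})"
    by (simp add: atLeast0LessThan)
  then have eigs: "eigs_desc Y = L"
    by (simp add: eigs_desc_def eig L_def flip: sorted_list_of_multiset_mset)
  define P where "P = filter (\<lambda>x. 0 < x) L"
  have mP: "mset P = image_mset d (mset_set {i. i < CARD('n) \<and> 0 < d i})"
    by (simp add: P_def L_def mxs filter_mset_image_mset filter_mset_mset_set)
  have lP: "length P = s"
    using arg_cong[OF mP, of size] card by simp
  have nth: "L ! i = P ! i" if "i < s" for i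
    using nth_filter_pos_of_sorted_desc[of L i] that lP by (simp add: P_def L_def)
  have pos: "0 < L ! i" if "i < s" for i
    using nth[OF that] nth_mem[of i P] that lP by (simp add: P_def)
  have "(\<Sum>i<s. ln (L ! i)) = sum_list (map ln P)"
    using nth lP by (simp add: sum_list_sum_nth atLeast0LessThan)
  also have "\<dots> = (\<Sum>i | i < CARD('n) \<and> 0 < d i. ln (d i))"
    by (simp add: sum_mset_sum_list[symmetric] mP multiset.map_comp o_def sum_unfold_sum_mset)
  finally show ?thesis unfolding Phi_def eigs using pos by simp
qed

definition hypersimplex :: "nat set \<Rightarrow> nat \<Rightarrow> (nat \<Rightarrow> real) set" where
  "hypersimplex I m = {c. (\<forall>j\<in>I. 0 \<le> c j \<and> c j \<le> 1) \<and> (\<Sum>j\<in>I. c j) = real m}"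

lemma sum_zero_one_valued:
  fixes c :: "nat \<Rightarrow> real"
  assumes "finite A" "\<And>j. j \<in> A \<Longrightarrow> c j = 0 \<or> c j = 1"
  shows "(\<Sum>j\<in>A. c j) = real (card {j\<in>A. c j = 1})"
proof -
  have "(\<Sum>j\<in>A. c j) = (\<Sum>j\<in>A. if c j = 1 then 1 else 0)"
    by (rule sum.cong) (use assms(2) in auto)
  also have "\<dots> = real (card {j\<in>A. c j = 1})"
    using assms(1) by (simp add: sum.If_cases Int_def conj_commute)
  finally show ?thesis .
qed

lemma hypersimplex_fractional_not_singleton:
  assumes I: "finite I" and c: "c \<in> hypersimplex I m" and i: "i \<in> I" "0 < c i" "c i < 1"
  obtains j where "j \<in> I" "j \<noteq> i" "0 < c j" "c j < 1"
proof (rule ccontr)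
  note found = that
  assume none: "\<not> thesis"
  have int: "c j = 0 \<or> c j = 1" if j: "j \<in> I - {i}" for j
    using c j none found[of j] by (force simp: hypersimplex_def)
  define N where "N = card {j \<in> I - {i}. c j = 1}"
  have "real m = c i + (\<Sum>j\<in>I - {i}. c j)"
    using c i I by (simp add: hypersimplex_def sum.remove)
  also have "(\<Sum>j\<in>I - {i}. c j) = real N"
    unfolding N_def using I int by (intro sum_zero_one_valued) auto
  finally have "real N < real m" "real m < real (N + 1)" using i by simp_all
  then have "N < m" "m < N + 1" by (simp_all only: of_nat_less_iff)
  then show False by linarith
qed

definition fractional_coords :: "nat set \<Rightarrow> (nat \<Rightarrow> real) \<Rightarrow> nat set" where
  "fractional_coords I c = {j\<in>I. 0 < c j \<and> c j < 1}"

text \<open>Shift mass between two fractional coordinates, in either direction, until one of them hits 0 or 1.\<close>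

lemma hypersimplex_split_fractional:
  assumes I: "finite I" and c: "c \<in> hypersimplex I m" and frac: "fractional_coords I c \<noteq> {}"
  obtains c1 c2 u where "c1 \<in> hypersimplex I m" "c2 \<in> hypersimplex I m"
    "fractional_coords I c1 \<subset> fractional_coords I c" "fractional_coords I c2 \<subset> fractional_coords I c"
    "0 \<le> u" "u \<le> 1" "c = (\<lambda>k. u * c1 k + (1 - u) * c2 k)"
proof -
  obtain i where i: "i \<in> I" "0 < c i" "c i < 1" using frac by (auto simp: fractional_coords_def)
  obtain j where j: "j \<in> I" "j \<noteq> i" "0 < c j" "c j < 1"
    using hypersimplex_fractional_not_singleton[OF I c i] by blast
  define e1 where "e1 = min (1 - c i) (c j)"
  define e2 where "e2 = min (c i) (1 - c j)"
  have e: "0 < e1" "0 < e2" using i j by (simp_all add: e1_def e2_def)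
  define u where "u = e2 / (e1 + e2)"
  define dl where "dl k = (if k = i then 1 else 0) - (if k = j then 1 else (0::real))" for k
  define c1 where "c1 k = c k + e1 * dl k" for k
  define c2 where "c2 k = c k - e2 * dl k" for k
  have sdl: "(\<Sum>k\<in>I. dl k) = 0" using i j I by (simp add: dl_def sum_subtractf)
  have "c1 \<in> hypersimplex I m"
    using c sdl i j e by (auto simp: hypersimplex_def c1_def dl_def e1_def sum.distrib simp flip: sum_distrib_left)
  moreover have "c2 \<in> hypersimplex I m"
    using c sdl i j e by (auto simp: hypersimplex_def c2_def dl_def e2_def sum_subtractf simp flip: sum_distrib_left)
  moreover have "fractional_coords I c1 \<subset> fractional_coords I c"
    "fractional_coords I c2 \<subset> fractional_coords I c"
    using i j by (auto simp: fractional_coords_def c1_def c2_def dl_def e1_def e2_def min_def split: if_splits)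
  moreover have "0 \<le> u" "u \<le> 1" using e by (auto simp: u_def)
  moreover have "c = (\<lambda>k. u * c1 k + (1 - u) * c2 k)"
  proof
    fix k
    have "u * c1 k + (1 - u) * c2 k = c k + (u * e1 - (1 - u) * e2) * dl k"
      by (simp add: c1_def c2_def algebra_simps)
    moreover have "u * e1 - (1 - u) * e2 = 0" using e by (simp add: u_def field_simps)
    ultimately show "c k = u * c1 k + (1 - u) * c2 k" by simp
  qed
  ultimately show thesis using that by blast
qed

lemma hypersimplex_induct [consumes 2, case_names vertex convex]:
  assumes I: "finite I" and c: "c \<in> hypersimplex I m"
    and vertex: "\<And>c. c \<in> hypersimplex I m \<Longrightarrow> \<forall>j\<in>I. c j = 0 \<or> c j = 1 \<Longrightarrow> P c"
    and convex: "\<And>c1 c2 u. c1 \<in> hypersimplex I m \<Longrightarrow> c2 \<in> hypersimplex I m \<Longrightarrow> P c1 \<Longrightarrow> P c2 \<Longrightarrow>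
        0 \<le> u \<Longrightarrow> u \<le> 1 \<Longrightarrow> P (\<lambda>k. u * c1 k + (1 - u) * c2 k)"
  shows "P c"
  using c
proof (induction "card (fractional_coords I c)" arbitrary: c rule: less_induct)
  case less
  show ?case
  proof (cases "fractional_coords I c = {}")
    case True
    then show ?thesis
      using less.prems by (intro vertex) (force simp: fractional_coords_def hypersimplex_def)+
  next
    case False
    have fin: "finite (fractional_coords I c')" for c' using I by (simp add: fractional_coords_def)
    obtain c1 c2 u where c12: "c1 \<in> hypersimplex I m" "c2 \<in> hypersimplex I m"
      and smaller: "fractional_coords I c1 \<subset> fractional_coords I c"
        "fractional_coords I c2 \<subset> fractional_coords I c"
      and u: "0 \<le> u" "u \<le> 1" and comb: "c = (\<lambda>k. u * c1 k + (1 - u) * c2 k)"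
      using hypersimplex_split_fractional[OF I less.prems False] by blast
    have "P c1" "P c2" using less.hyps c12 smaller psubset_card_mono[OF fin] by blast+
    then show ?thesis using convex[OF c12 _ _ u] comb by simp
  qed
qed

text \<open>\<open>flattened_log_sum n s lam k\<close> is \<open>Phi_s\<close> of the spectrum \<open>lam\<close> after replacing
  \<open>lam_k, ..., lam_(n-1)\<close> by \<open>s - k\<close> copies of \<open>(lam_k + ... + lam_(n-1)) / (s - k)\<close>.
  At Nikolov's cutoff index \<open>k\<close> it is the value of the concave envelope; only the lower
  bound is needed here.\<close>

definition envelope_cutoff :: "nat \<Rightarrow> nat \<Rightarrow> (nat \<Rightarrow> real) \<Rightarrow> nat \<Rightarrow> bool" where
  "envelope_cutoff n s lam k \<longleftrightarrow> k < s \<and>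
     (\<forall>j. k \<le> j \<longrightarrow> j < n \<longrightarrow> lam j * real (s - k) \<le> (\<Sum>i\<in>{k..<n}. lam i)) \<and>
     (\<forall>j<k. (\<Sum>i\<in>{k..<n}. lam i) < lam j * real (s - k))"

definition flattened_log_sum :: "nat \<Rightarrow> nat \<Rightarrow> (nat \<Rightarrow> real) \<Rightarrow> nat \<Rightarrow> real" where
  "flattened_log_sum n s lam k =
     (\<Sum>i<k. ln (lam i)) + real (s - k) * ln ((\<Sum>i\<in>{k..<n}. lam i) / real (s - k))"

lemma hypo_concave_onD:
  assumes "hypo_concave_on S g" "x \<in> S" "y \<in> S" "0 \<le> u" "u \<le> 1" "ereal a \<le> g x" "ereal b \<le> g y"
  shows "ereal (u * a + (1 - u) * b) \<le> g (u *\<^sub>R x + (1 - u) *\<^sub>R y)"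
  using assms unfolding hypo_concave_on_def by blast

lemma Phi_hat_geI:
  assumes "\<And>g. hypo_concave_on {Y. psd Y} g \<Longrightarrow> (\<forall>Y\<in>{Y. psd Y}. Phi s Y 0 \<le> g Y) \<Longrightarrow> v \<le> g X"
  shows "v \<le> Phi_hat s X 0"
  unfolding Phi_hat_def concave_env_def using assms by (auto intro!: Inf_greatest)

lemma Phi_spectral_sum_vertex:
  fixes q :: "nat \<Rightarrow> real^'n::finite"
  assumes q: "orthonormal_frame q" and ks: "k < s" and sn: "s \<le> CARD('n)"
    and pos: "\<And>j. j < k \<Longrightarrow> 0 < lam j" and a: "0 < a"
    and c: "c \<in> hypersimplex {k..<CARD('n)} (s - k)"
    and vertex: "\<forall>j\<in>{k..<CARD('n)}. c j = 0 \<or> c j = 1"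
  shows "Phi s (spectral_sum q (\<lambda>j. if j < k then lam j else a * c j)) 0
    = ereal ((\<Sum>j<k. ln (lam j)) + real (s - k) * ln a)"
proof -
  define d where "d j = (if j < k then lam j else a * c j)" for j
  define S where "S = {j\<in>{k..<CARD('n)}. c j = 1}"
  have cardS: "card S = s - k"
    using c sum_zero_one_valued[of "{k..<CARD('n)}" c] vertex by (simp add: S_def hypersimplex_def)
  have disj: "{..<k} \<inter> S = {}" by (auto simp: S_def)
  have positive: "{j. j < CARD('n) \<and> 0 < d j} = {..<k} \<union> S"
  proof (intro set_eqI iffI)
    fix j assume "j \<in> {j. j < CARD('n) \<and> 0 < d j}"
    then show "j \<in> {..<k} \<union> S"
      using vertex[rule_format, of j] a by (cases "j < k") (auto simp: d_def S_def)
  next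
    fix j assume "j \<in> {..<k} \<union> S"
    then show "j \<in> {j. j < CARD('n) \<and> 0 < d j}" using pos a ks sn by (auto simp: d_def S_def)
  qed
  have "card {j. j < CARD('n) \<and> 0 < d j} = s"
    unfolding positive using disj cardS ks by (simp add: card_Un_disjoint S_def)
  then have "Phi s (spectral_sum q d) 0 = ereal (\<Sum>j\<in>{..<k} \<union> S. ln (d j))"
    unfolding positive[symmetric] by (rule Phi_eq_sum_ln_positive_eigenvalues[OF eig_mset_spectral_sum[OF q]])
  also have "(\<Sum>j\<in>{..<k} \<union> S. ln (d j)) = (\<Sum>j<k. ln (d j)) + (\<Sum>j\<in>S. ln (d j))"
    using disj by (simp add: sum.union_disjoint S_def)
  also have "(\<Sum>j<k. ln (d j)) = (\<Sum>j<k. ln (lam j))" by (simp add: d_def)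
  also have "(\<Sum>j\<in>S. ln (d j)) = real (s - k) * ln a"
    using cardS by (simp add: S_def d_def)
  finally show ?thesis by (simp add: d_def)
qed

lemma Phi_hat_spectral_sum_hypersimplex_ge:
  fixes q :: "nat \<Rightarrow> real^'n::finite"
  assumes q: "orthonormal_frame q" and ks: "k < s" and sn: "s \<le> CARD('n)"
    and pos: "\<And>j. j < k \<Longrightarrow> 0 < lam j" and a: "0 < a"
    and c: "c \<in> hypersimplex {k..<CARD('n)} (s - k)"
  shows "ereal ((\<Sum>j<k. ln (lam j)) + real (s - k) * ln a)
    \<le> Phi_hat s (spectral_sum q (\<lambda>j. if j < k then lam j else a * c j)) 0"
proof (rule Phi_hat_geI)
  fix g :: "real^'n^'n \<Rightarrow> ereal"
  assume conc: "hypo_concave_on {Y. psd Y} g" and maj: "\<forall>Y\<in>{Y. psd Y}. Phi s Y 0 \<le> g Y"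
  define F where "F = (\<Sum>j<k. ln (lam j)) + real (s - k) * ln a"
  define Y where "Y c = spectral_sum q (\<lambda>j. if j < k then lam j else a * c j)" for c
  have psdY: "psd (Y c)" if "c \<in> hypersimplex {k..<CARD('n)} (s - k)" for c
    unfolding Y_def using that pos a
    by (intro psd_spectral_sum) (auto simp: hypersimplex_def less_imp_le)
  show "ereal F \<le> g (Y c)"
    using finite_atLeastLessThan c
  proof (induction c rule: hypersimplex_induct)
    case (vertex c)
    have "Phi s (Y c) 0 = ereal F"
      unfolding Y_def F_def using q ks sn pos a vertex by (rule Phi_spectral_sum_vertex)
    moreover have "Phi s (Y c) 0 \<le> g (Y c)" using maj psdY[OF vertex(1)] by simp
    ultimately show ?case by simp
  next
    case (convex c1 c2 u)
    have Y: "Y (\<lambda>j. u * c1 j + (1 - u) * c2 j) = u *\<^sub>R Y c1 + (1 - u) *\<^sub>R Y c2"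
      unfolding Y_def spectral_sum_linear[symmetric]
      by (intro arg_cong[where f="spectral_sum q"] ext) (simp add: algebra_simps)
    have "ereal (u * F + (1 - u) * F) \<le> g (u *\<^sub>R Y c1 + (1 - u) *\<^sub>R Y c2)"
      using psdY[OF convex(1)] psdY[OF convex(2)] convex(3-6) by (intro hypo_concave_onD[OF conc]) simp_all
    moreover have "u * F + (1 - u) * F = F" by (simp add: algebra_simps)
    ultimately show ?case by (simp only: Y)
  qed
qed

lemma Phi_hat_ge_flattened_log_sum:
  fixes q :: "nat \<Rightarrow> real^'n::finite"
  assumes q: "orthonormal_frame q" and sn: "s \<le> CARD('n)"
    and nonneg: "\<And>j. j < CARD('n) \<Longrightarrow> 0 \<le> lam j"
    and cut: "envelope_cutoff CARD('n) s lam k" and tail: "0 < (\<Sum>i\<in>{k..<CARD('n)}. lam i)"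
  shows "ereal (flattened_log_sum CARD('n) s lam k) \<le> Phi_hat s (spectral_sum q lam) 0"
proof -
  define T where "T = (\<Sum>i\<in>{k..<CARD('n)}. lam i)"
  define a where "a = T / real (s - k)"
  define c where "c j = lam j / a" for j
  have ks: "k < s" using cut by (simp add: envelope_cutoff_def)
  have a: "0 < a" using tail ks by (simp add: a_def T_def)
  have pos: "0 < lam j" if "j < k" for j
  proof -
    have "0 < lam j * real (s - k)" using cut that tail by (force simp: envelope_cutoff_def)
    then show ?thesis using ks by (simp add: zero_less_mult_iff)
  qed
  have c: "c \<in> hypersimplex {k..<CARD('n)} (s - k)"
  proof -
    have "lam j \<le> a" if "k \<le> j" "j < CARD('n)" for j
      using cut that ks by (simp add: envelope_cutoff_def a_def T_def field_simps)
    moreover have "(\<Sum>j\<in>{k..<CARD('n)}. c j) = T / a"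
      unfolding c_def T_def by (rule sum_divide_distrib[symmetric])
    moreover have "T / a = real (s - k)" using tail ks by (simp add: a_def T_def)
    ultimately show ?thesis using nonneg a by (auto simp: hypersimplex_def c_def)
  qed
  have "(\<lambda>j. if j < k then lam j else a * c j) = lam" using a by (auto simp: c_def)
  then show ?thesis
    using Phi_hat_spectral_sum_hypersimplex_ge[where lam=lam, OF q ks sn pos a c]
    by (simp add: flattened_log_sum_def a_def T_def)
qed

section \<open>Majorization and the flattened log-sum\<close>

lemma abel_summation_nonpos:
  fixes c d :: "nat \<Rightarrow> real"
  assumes s1: "1 \<le> s" and cm: "\<And>i j. i \<le> j \<Longrightarrow> j < s \<Longrightarrow> c i \<le> c j"
    and D: "\<And>j. j \<le> s \<Longrightarrow> 0 \<le> (\<Sum>k<j. d k)" and Ds: "(\<Sum>k<s. d k) = 0"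
  shows "(\<Sum>k<s. c k * d k) \<le> 0"
proof -
  have gen: "1 \<le> j \<Longrightarrow> j \<le> s \<Longrightarrow> (\<Sum>k<j. c k * d k) \<le> c (j - 1) * (\<Sum>k<j. d k)" for j
  proof (induction j)
    case 0 then show ?case by simp
  next
    case (Suc j)
    show ?case
    proof (cases "j = 0")
      case True then show ?thesis by simp
    next
      case False
      then have IH: "(\<Sum>k<j. c k * d k) \<le> c (j - 1) * (\<Sum>k<j. d k)" using Suc by simp
      have "c (j - 1) * (\<Sum>k<j. d k) \<le> c j * (\<Sum>k<j. d k)"
        using cm[of "j - 1" j] D[of j] Suc.prems by (intro mult_right_mono) auto
      then have "(\<Sum>k<Suc j. c k * d k) \<le> c j * (\<Sum>k<j. d k) + c j * d j" using IH by simp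
      also have "\<dots> = c (Suc j - 1) * (\<Sum>k<Suc j. d k)" by (simp add: algebra_simps)
      finally show ?thesis .
    qed
  qed
  have "(\<Sum>k<s. c k * d k) \<le> c (s - 1) * (\<Sum>k<s. d k)" using gen[OF s1] by simp
  then show ?thesis using Ds by simp
qed

lemma sum_ln_le_of_majorization:
  fixes rho nu :: "nat \<Rightarrow> real"
  assumes s1: "1 \<le> s"
    and rd: "\<And>i j. i \<le> j \<Longrightarrow> j < s \<Longrightarrow> rho j \<le> rho i"
    and rp: "\<And>k. k < s \<Longrightarrow> 0 < rho k" and np: "\<And>k. k < s \<Longrightarrow> 0 < nu k"
    and ps: "\<And>j. j \<le> s \<Longrightarrow> (\<Sum>k<j. rho k) \<le> (\<Sum>k<j. nu k)"
    and tot: "(\<Sum>k<s. rho k) = (\<Sum>k<s. nu k)"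
  shows "(\<Sum>k<s. ln (nu k)) \<le> (\<Sum>k<s. ln (rho k))"
proof -
  have "(\<Sum>k<s. ln (nu k)) - (\<Sum>k<s. ln (rho k)) = (\<Sum>k<s. ln (nu k / rho k))"
  proof -
    have a: "nu k \<noteq> 0" "rho k \<noteq> 0" if "k < s" for k using rp[OF that] np[OF that] by auto
    show ?thesis by (simp add: sum_subtractf[symmetric]) (rule sum.cong, auto simp: ln_div a)
  qed
  also have "\<dots> \<le> (\<Sum>k<s. nu k / rho k - 1)"
    by (rule sum_mono) (simp add: ln_le_minus_one rp np)
  also have "\<dots> = (\<Sum>k<s. (1 / rho k) * (nu k - rho k))"
    by (rule sum.cong) (auto simp: field_simps rp[THEN less_imp_neq, symmetric])
  also have "\<dots> \<le> 0"
  proof (rule abel_summation_nonpos[OF s1])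
    fix i j assume "i \<le> j" "j < s"
    then show "1 / rho i \<le> 1 / rho j" using rd[of i j] rp[of j] by (simp add: frac_le)
  next
    fix j assume "j \<le> s"
    then show "0 \<le> (\<Sum>k<j. nu k - rho k)" using ps[of j] by (simp add: sum_subtractf)
  next
    show "(\<Sum>k<s. nu k - rho k) = 0" using tot by (simp add: sum_subtractf)
  qed
  finally show ?thesis by simp
qed

lemma desc_prefix_average_ge:
  fixes nu :: "nat \<Rightarrow> real"
  assumes aj: "a \<le> j" and jb: "j \<le> b" and dsc: "\<And>i l. a \<le> i \<Longrightarrow> i \<le> l \<Longrightarrow> l < b \<Longrightarrow> nu l \<le> nu i"
  shows "real (j - a) * (\<Sum>k\<in>{a..<b}. nu k) \<le> real (b - a) * (\<Sum>k\<in>{a..<j}. nu k)"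
proof (cases "j = b")
  case True then show ?thesis by simp
next
  case False
  then have jb': "j < b" using jb by simp
  define v where "v = nu j"
  have s1: "real (j - a) * v \<le> (\<Sum>k\<in>{a..<j}. nu k)"
  proof -
    have "(\<Sum>k\<in>{a..<j}. v) \<le> (\<Sum>k\<in>{a..<j}. nu k)"
      by (rule sum_mono) (use dsc jb' in \<open>auto simp: v_def\<close>)
    then show ?thesis by simp
  qed
  have s2: "(\<Sum>k\<in>{j..<b}. nu k) \<le> real (b - j) * v"
  proof -
    have "(\<Sum>k\<in>{j..<b}. nu k) \<le> (\<Sum>k\<in>{j..<b}. v)"
      by (rule sum_mono) (use dsc aj in \<open>auto simp: v_def\<close>)
    then show ?thesis by simp
  qed
  have split: "(\<Sum>k\<in>{a..<b}. nu k) = (\<Sum>k\<in>{a..<j}. nu k) + (\<Sum>k\<in>{j..<b}. nu k)"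
    using aj jb by (simp add: sum.atLeastLessThan_concat)
  have ba: "real (b - a) = real (j - a) + real (b - j)" using aj jb by simp
  have "real (j - a) * (\<Sum>k\<in>{j..<b}. nu k) \<le> real (j - a) * (real (b - j) * v)"
    using s2 by (simp add: mult_left_mono)
  also have "\<dots> = real (b - j) * (real (j - a) * v)" by simp
  also have "\<dots> \<le> real (b - j) * (\<Sum>k\<in>{a..<j}. nu k)" using s1 by (simp add: mult_left_mono)
  finally have "real (j - a) * (\<Sum>k\<in>{j..<b}. nu k) \<le> real (b - j) * (\<Sum>k\<in>{a..<j}. nu k)" .
  then show ?thesis unfolding split ba by (simp add: algebra_simps)
qed

lemma envelope_cutoff_exists:
  fixes lam :: "nat \<Rightarrow> real"
  assumes s: "1 \<le> s" "s \<le> n"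
    and desc: "\<And>i j. i \<le> j \<Longrightarrow> j < n \<Longrightarrow> lam j \<le> lam i"
    and nonneg: "\<And>i. i < n \<Longrightarrow> 0 \<le> lam i"
  obtains k where "envelope_cutoff n s lam k"
proof -
  define tau where "tau k = (\<Sum>i\<in>{k..<n}. lam i)" for k
  define P where "P k \<longleftrightarrow> lam k * real (s - k) \<le> tau k" for k
  have tau_Suc: "tau k = lam k + tau (Suc k)" if "k < n" for k
    using that by (simp add: tau_def sum.atLeast_Suc_lessThan)
  have "P (s - 1)"
    using tau_Suc[of "s - 1"] s sum_nonneg[of "{s..<n}" lam] nonneg by (simp add: P_def tau_def)
  define k where "k = (LEAST k. P k)"
  have Pk: "P k" unfolding k_def by (rule LeastI) fact
  have ks: "k < s" using Least_le[of P "s - 1"] \<open>P (s - 1)\<close> s by (simp add: k_def)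
  have "lam j * real (s - k) \<le> tau k" if "k \<le> j" "j < n" for j
    using Pk desc[OF that] by (simp add: P_def) (meson mult_right_mono of_nat_0_le_iff order_trans)
  moreover have "tau k < lam j * real (s - k)" if "j < k" for j
  proof -
    have "\<not> P (k - 1)" using that by (intro not_less_Least) (auto simp: k_def)
    moreover have "tau (k - 1) = lam (k - 1) + tau k" "real (s - (k - 1)) = real (s - k) + 1"
      using tau_Suc[of "k - 1"] that ks s by (simp_all add: Suc_diff_1 of_nat_diff)
    ultimately have "tau k < lam (k - 1) * real (s - k)" by (simp add: P_def algebra_simps)
    also have "\<dots> \<le> lam j * real (s - k)" using desc[of j "k - 1"] that ks s
      by (intro mult_right_mono) auto
    finally show ?thesis .
  qed
  ultimately have "envelope_cutoff n s lam k" using ks by (simp add: envelope_cutoff_def tau_def)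
  then show thesis by (rule that)
qed

lemma envelope_tail_pos:
  fixes lam nu :: "nat \<Rightarrow> real"
  assumes ks: "k < s" and sn: "s \<le> n"
    and pos: "\<And>i. i < s \<Longrightarrow> 0 < nu i"
    and part: "(\<Sum>i<k. lam i) \<le> (\<Sum>i<k. nu i)"
    and total: "(\<Sum>i<n. lam i) = (\<Sum>i<s. nu i)"
  shows "0 < (\<Sum>i\<in>{k..<n}. lam i)"
proof -
  have "0 < (\<Sum>i\<in>{k..<s}. nu i)" using ks pos by (intro sum_pos) auto
  moreover have "(\<Sum>i<k. lam i) + (\<Sum>i\<in>{k..<n}. lam i) = (\<Sum>i<k. nu i) + (\<Sum>i\<in>{k..<s}. nu i)"
    using total ks sn by (simp add: sum_lessThan_split[of k n] sum_lessThan_split[of k s])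
  ultimately show ?thesis using part by linarith
qed

lemma sum_lessThan_if_split:
  fixes f :: "nat \<Rightarrow> real"
  assumes "k \<le> j"
  shows "(\<Sum>i<j. if i < k then f i else c) = (\<Sum>i<k. f i) + real (j - k) * c"
proof -
  have "(\<Sum>i\<in>{k..<j}. if i < k then f i else c) = (\<Sum>i\<in>{k..<j}. c)" by (rule sum.cong) auto
  then show ?thesis using assms by (simp add: sum_lessThan_split[of k j])
qed

lemma flattened_prefix_sum_le:
  fixes lam nu :: "nat \<Rightarrow> real"
  assumes ks: "k < s" and js: "j \<le> s"
    and part: "\<And>j. j \<le> s \<Longrightarrow> (\<Sum>i<j. lam i) \<le> (\<Sum>i<j. nu i)"
    and desc: "\<And>i l. k \<le> i \<Longrightarrow> i \<le> l \<Longrightarrow> l < s \<Longrightarrow> nu l \<le> nu i"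
    and total: "(\<Sum>i<s. nu i) = (\<Sum>i<k. lam i) + T"
  shows "(\<Sum>i<j. if i < k then lam i else T / real (s - k)) \<le> (\<Sum>i<j. nu i)"
proof (cases "j \<le> k")
  case True
  then have "(\<Sum>i<j. if i < k then lam i else T / real (s - k)) = (\<Sum>i<j. lam i)" by simp
  then show ?thesis using part[OF js] by simp
next
  case False
  then have kj: "k \<le> j" by simp
  define m where "m = real (s - k)"
  define a where "a = real (j - k)"
  define L where "L = (\<Sum>i<k. lam i)"
  define A where "A = (\<Sum>i<k. nu i)"
  have m: "0 < m" "a \<le> m" using ks js by (simp_all add: m_def a_def)
  have LA: "L \<le> A" using part[of k] ks by (simp add: L_def A_def)
  have lhs: "(\<Sum>i<j. if i < k then lam i else T / m) = L + a * (T / m)"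
    using kj by (simp add: sum_lessThan_if_split L_def a_def)
  have rhs: "(\<Sum>i<j. nu i) = A + (\<Sum>i\<in>{k..<j}. nu i)"
    using kj by (simp add: sum_lessThan_split[of k j] A_def)
  have "a * (\<Sum>i\<in>{k..<s}. nu i) \<le> m * (\<Sum>i\<in>{k..<j}. nu i)"
    unfolding a_def m_def using kj js desc by (rule desc_prefix_average_ge)
  moreover have "(\<Sum>i\<in>{k..<s}. nu i) = L + T - A"
    using total ks by (simp add: A_def L_def sum_lessThan_split[of k s])
  ultimately have avg: "a * (L + T - A) \<le> m * (\<Sum>i\<in>{k..<j}. nu i)" by simp
  have "m * (L + a * (T / m)) = m * L + a * T" using m by (simp add: field_simps)
  also have "\<dots> \<le> m * A + a * (L + T - A)"
    using mult_left_mono[OF LA, of "m - a"] m by (simp add: algebra_simps)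
  also have "\<dots> \<le> m * (A + (\<Sum>i\<in>{k..<j}. nu i))" using avg by (simp add: algebra_simps)
  finally have "m * (L + a * (T / m)) \<le> m * (A + (\<Sum>i\<in>{k..<j}. nu i))" .
  then have "L + a * (T / m) \<le> A + (\<Sum>i\<in>{k..<j}. nu i)" using m(1) by (rule mult_left_le_imp_le)
  then show ?thesis unfolding m_def[symmetric] lhs rhs .
qed

lemma sum_ln_le_flattened_log_sum:
  fixes lam nu :: "nat \<Rightarrow> real"
  assumes sn: "s \<le> n" and cut: "envelope_cutoff n s lam k"
    and ldesc: "\<And>i j. i \<le> j \<Longrightarrow> j < n \<Longrightarrow> lam j \<le> lam i"
    and ndesc: "\<And>i j. i \<le> j \<Longrightarrow> j < s \<Longrightarrow> nu j \<le> nu i"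
    and npos: "\<And>i. i < s \<Longrightarrow> 0 < nu i"
    and part: "\<And>j. j \<le> s \<Longrightarrow> (\<Sum>i<j. lam i) \<le> (\<Sum>i<j. nu i)"
    and total: "(\<Sum>i<n. lam i) = (\<Sum>i<s. nu i)"
  shows "(\<Sum>i<s. ln (nu i)) \<le> flattened_log_sum n s lam k"
proof -
  have ks: "k < s" using cut by (simp add: envelope_cutoff_def)
  define T where "T = (\<Sum>i\<in>{k..<n}. lam i)"
  define m where "m = real (s - k)"
  define rho where "rho i = (if i < k then lam i else T / m)" for i
  have m: "0 < m" using ks by (simp add: m_def)
  have T: "0 < T"
    unfolding T_def by (rule envelope_tail_pos[OF ks sn npos part[OF less_imp_le[OF ks]] total])
  have big: "T / m < lam i" if "i < k" for i
  proof -
    have "T < lam i * m" using cut that unfolding envelope_cutoff_def T_def m_def by blast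
    then show ?thesis using m by (simp add: pos_divide_less_eq)
  qed
  have rpos: "0 < rho i" for i
    using big T m by (auto simp: rho_def) (meson divide_pos_pos less_trans)
  have split_total: "(\<Sum>i<s. nu i) = (\<Sum>i<k. lam i) + T"
    using total ks sn by (simp add: T_def sum_lessThan_split[of k n])
  have "(\<Sum>i<s. ln (nu i)) \<le> (\<Sum>i<s. ln (rho i))"
  proof (rule sum_ln_le_of_majorization)
    show "1 \<le> s" using ks by simp
    show "rho j \<le> rho i" if "i \<le> j" "j < s" for i j
      using that ldesc[of i j] big[of i] ks sn by (auto simp: rho_def)
    show "0 < rho i" for i by (rule rpos)
    show "0 < nu i" if "i < s" for i using npos that .
    show "(\<Sum>i<j. rho i) \<le> (\<Sum>i<j. nu i)" if "j \<le> s" for j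
      unfolding rho_def m_def using flattened_prefix_sum_le[OF ks that part _ split_total] ndesc by blast
    show "(\<Sum>i<s. rho i) = (\<Sum>i<s. nu i)"
      using ks m unfolding rho_def by (simp add: sum_lessThan_if_split split_total m_def)
  qed
  also have "(\<Sum>i<s. ln (rho i)) = (\<Sum>i<s. if i < k then ln (lam i) else ln (T / m))"
    by (simp add: rho_def if_distrib)
  also have "\<dots> = flattened_log_sum n s lam k"
    using ks by (simp add: sum_lessThan_if_split flattened_log_sum_def T_def m_def)
  finally show ?thesis .
qed

lemma sum_eigenvalues_M_of:
  fixes q :: "nat \<Rightarrow> real^'n::finite"
  assumes q: "orthonormal_frame q" and M: "M_of A x = spectral_sum q lam"
  shows "(\<Sum>k<CARD('n). lam k) = (\<Sum>i\<in>UNIV. x $ i * (column i A \<bullet> column i A))"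
proof -
  have "lam k = (\<Sum>i\<in>UNIV. x $ i * (column i A \<bullet> q k)\<^sup>2)" if "k < CARD('n)" for k
    using spectral_sum_diagonal[OF q that, of lam] by (simp add: M_of_quadratic_form_sum flip: M)
  then have "(\<Sum>k<CARD('n). lam k) = (\<Sum>k<CARD('n). \<Sum>i\<in>UNIV. x $ i * (column i A \<bullet> q k)\<^sup>2)"
    by simp
  also have "\<dots> = (\<Sum>i\<in>UNIV. x $ i * (\<Sum>k<CARD('n). (q k \<bullet> column i A)\<^sup>2))"
    by (subst sum.swap) (simp add: sum_distrib_left inner_commute)
  also have "\<dots> = (\<Sum>i\<in>UNIV. x $ i * (column i A \<bullet> column i A))"
    by (simp add: orthonormal_frame_parseval[OF q])
  finally show ?thesis .
qed

lemma ln_det_spectral_sum_shift: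
  fixes p :: "nat \<Rightarrow> real^'n::finite"
  assumes p: "orthonormal_frame p" and nonneg: "\<And>i. i < CARD('n) \<Longrightarrow> 0 \<le> mu i" and t: "0 < t"
  shows "ln (det (spectral_sum p mu + t *\<^sub>R mat 1)) = (\<Sum>k<CARD('n). ln (mu k + t))"
proof -
  have "mu k + t \<noteq> 0" if "k < CARD('n)" for k using nonneg[OF that] t by linarith
  then show ?thesis
    unfolding spectral_sum_add_scaled_id[OF p] det_spectral_sum[OF p] by (intro ln_prod) auto
qed

lemma sum_eigenvalues_gram_shift:
  fixes A0 At :: "real^'n::finite^'n"
  assumes CA: "transpose A0 ** A0 = transpose At ** At + t *\<^sub>R mat 1"
    and q: "orthonormal_frame q" and M0: "M_of A0 x = spectral_sum q lam"
    and p: "orthonormal_frame p" and Mt: "M_of At x = spectral_sum p mu"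
  shows "(\<Sum>k<CARD('n). lam k) = (\<Sum>k<CARD('n). mu k) + t * (\<Sum>i\<in>UNIV. x $ i)"
proof -
  have "column i A0 \<bullet> column i A0 = column i At \<bullet> column i At + t" for i
    using arg_cong[OF CA, of "\<lambda>B. B $ i $ i"] by (simp add: matrix_mult_transpose_dot_column mat_def)
  then show ?thesis
    by (simp add: sum_eigenvalues_M_of[OF q M0] sum_eigenvalues_M_of[OF p Mt] algebra_simps
        sum.distrib sum_distrib_left)
qed

lemma M_of_eigenvalue_comparison:
  fixes A0 At :: "real^'n::finite^'n"
  assumes CA: "transpose A0 ** A0 = transpose At ** At + t *\<^sub>R mat 1"
    and x: "x \<in> feas s" and sn: "s \<le> CARD('n)" and t: "0 \<le> t" and rank: "rank At \<le> s"
    and q: "orthonormal_frame q" and M0: "M_of A0 x = spectral_sum q lam"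
    and p: "orthonormal_frame p" and Mt: "M_of At x = spectral_sum p mu"
    and desc: "\<And>i j. i \<le> j \<Longrightarrow> j < CARD('n) \<Longrightarrow> mu j \<le> mu i"
    and nonneg: "\<And>i. i < CARD('n) \<Longrightarrow> 0 \<le> mu i"
  shows "\<And>k. s \<le> k \<Longrightarrow> k < CARD('n) \<Longrightarrow> mu k = 0"
    and "\<And>j. j \<le> s \<Longrightarrow> (\<Sum>k<j. lam k) \<le> (\<Sum>k<j. mu k + t)"
    and "(\<Sum>k<CARD('n). lam k) = (\<Sum>k<s. mu k + t)"
proof -
  have x01: "\<And>i. 0 \<le> x $ i \<and> x $ i \<le> 1" and xsum: "(\<Sum>i\<in>UNIV. x $ i) = real s"
    using x by (auto simp: feas_def)
  have "rank (spectral_sum p mu) \<le> s" using rank_M_of_le[of At x] rank Mt by simp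
  then show tail: "mu k = 0" if "s \<le> k" "k < CARD('n)" for k
    using p desc nonneg that by (intro eigenvalues_beyond_rank_zero)
  show "(\<Sum>k<j. lam k) \<le> (\<Sum>k<j. mu k + t)" if "j \<le> s" for j
    using partial_eigenvalue_sums_shift[OF CA x01 t q M0 p Mt desc nonneg, of j] that sn
    by (simp add: sum.distrib)
  show "(\<Sum>k<CARD('n). lam k) = (\<Sum>k<s. mu k + t)"
    using sum_eigenvalues_gram_shift[OF CA q M0 p Mt] tail sn
    by (simp add: sum.distrib xsum sum_lessThan_split[of s "CARD('n)"])
qed

lemma shifted_log_det_le_Phi_hat:
  fixes A0 At :: "real^'n::finite^'n"
  assumes CA: "transpose A0 ** A0 = transpose At ** At + t *\<^sub>R mat 1"
    and s: "1 \<le> s" "s \<le> CARD('n)" and t: "0 < t" and rank: "rank At \<le> s"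
    and x: "x \<in> feas s"
  shows "ereal (ln (det (M_of At x + t *\<^sub>R mat 1)) - (real CARD('n) - real s) * ln t)
    \<le> Phi_hat s (M_of A0 x) 0"
proof -
  have x0: "\<And>i. 0 \<le> x $ i" using x by (simp add: feas_def)
  obtain q lam where q: "orthonormal_frame q" and M0: "M_of A0 x = spectral_sum q lam"
    and ldesc: "\<And>i j. i \<le> j \<Longrightarrow> j < CARD('n) \<Longrightarrow> lam j \<le> lam i"
    using symmetric_spectral_decomposition[OF symmetric_M_of] by metis
  obtain p mu where p: "orthonormal_frame p" and Mt: "M_of At x = spectral_sum p mu"
    and mdesc: "\<And>i j. i \<le> j \<Longrightarrow> j < CARD('n) \<Longrightarrow> mu j \<le> mu i"
    using symmetric_spectral_decomposition[OF symmetric_M_of] by metis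
  have lnonneg: "0 \<le> lam i" if "i < CARD('n)" for i
    using psd_spectral_sum_nonneg[OF q _ that] psd_M_of[OF x0] M0 by metis
  have mnonneg: "0 \<le> mu i" if "i < CARD('n)" for i
    using psd_spectral_sum_nonneg[OF p _ that] psd_M_of[OF x0] Mt by metis
  note comparison = M_of_eigenvalue_comparison[OF CA x s(2) less_imp_le[OF t] rank q M0 p Mt mdesc mnonneg]
  obtain k where cut: "envelope_cutoff CARD('n) s lam k"
    using envelope_cutoff_exists[where lam=lam, OF s ldesc lnonneg] by blast
  have tail: "0 < (\<Sum>i\<in>{k..<CARD('n)}. lam i)"
    using cut s t mnonneg comparison(2,3)
    by (intro envelope_tail_pos[where nu="\<lambda>k. mu k + t"]) (auto simp: envelope_cutoff_def add_nonneg_pos)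
  have "ln (det (M_of At x + t *\<^sub>R mat 1)) - (real CARD('n) - real s) * ln t = (\<Sum>k<s. ln (mu k + t))"
    using ln_det_spectral_sum_shift[OF p mnonneg t] comparison(1) s
    by (simp add: Mt sum_lessThan_split[of s "CARD('n)"] of_nat_diff)
  also have "\<dots> \<le> flattened_log_sum CARD('n) s lam k"
    using s t mnonneg comparison(2,3)
    by (intro sum_ln_le_flattened_log_sum[OF s(2) cut ldesc]) (auto intro: mdesc add_nonneg_pos)
  finally have "ereal (ln (det (M_of At x + t *\<^sub>R mat 1)) - (real CARD('n) - real s) * ln t)
      \<le> ereal (flattened_log_sum CARD('n) s lam k)" by simp
  also have "\<dots> \<le> Phi_hat s (M_of A0 x) 0"
    using Phi_hat_ge_flattened_log_sum[where lam=lam, OF q s(2) lnonneg cut tail] by (simp add: M0)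
  finally show ?thesis .
qed

lemma ereal_SUP_diff_le:
  fixes f :: "'a \<Rightarrow> real"
  assumes "S \<noteq> {}" and le: "\<And>x. x \<in> S \<Longrightarrow> ereal (f x - c) \<le> Z"
  shows "ereal ((SUP x\<in>S. f x) - c) \<le> Z"
proof (cases Z)
  case (real z)
  then have "f x \<le> z + c" if "x \<in> S" for x using le[OF that] by simp
  then have "(SUP x\<in>S. f x) \<le> z + c" using assms(1) by (rule cSUP_least[rotated])
  then show ?thesis using real by simp
next
  case MInf
  then show ?thesis using assms by auto
qed simp

lemma feas_nonempty: "s \<le> CARD('n) \<Longrightarrow> (feas s :: (real^'n::finite) set) \<noteq> {}"
proof -
  assume "s \<le> CARD('n)"
  then have "(\<chi> i. real s / real CARD('n)) \<in> (feas s :: (real^'n) set)"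
    by (simp add: feas_def divide_le_eq_1)
  then show ?thesis by auto
qed

theorem corollary4:
  fixes C A0 At :: "real^('n::{finite,linorder})^('n::{finite,linorder})" and s :: nat and t :: real
  assumes "1 \<le> s" and "s \<le> CARD('n)"
    and "pd C"
    and "0 < t" and "t \<le> lambda_min C"
    and "cholesky_factor A0 C"
    and "cholesky_factor At (C - t *\<^sub>R mat 1)"
    and "s \<ge> rank (C - t *\<^sub>R mat 1)"
  shows "ereal (zD s t At) \<le> zhat0 s A0"
proof -
  have C0: "C = transpose A0 ** A0" and Ct: "C - t *\<^sub>R mat 1 = transpose At ** At"
    using assms(6,7) by (simp_all add: cholesky_factor_def)
  then have CA: "transpose A0 ** A0 = transpose At ** At + t *\<^sub>R mat 1"
    by (simp add: algebra_simps)
  have rank: "rank At \<le> s" using assms(8) Ct by (simp add: rank_gram)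
  have "ereal (ln (det (M_of At x + t *\<^sub>R mat 1)) - (real CARD('n) - real s) * ln t) \<le> zhat0 s A0"
    if "x \<in> feas s" for x
    using shifted_log_det_le_Phi_hat[OF CA assms(1,2,4) rank that] SUP_upper[OF that]
    unfolding zhat0_def by (rule order_trans)
  then show ?thesis
    unfolding zD_def by (rule ereal_SUP_diff_le[OF feas_nonempty[OF assms(2)]])
qed

end
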